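(* Let $k_0\subset k\subset K$, where $K/k$ is a finite totally ramified Galois extension of complete discrete valuation fields with group $G$ and $k/k_0$ is a finite totally ramified extension; put $e_0=[K:k_0]$. I. Let $B\subset K[G]\setminus\{0\}$ be a finite $k_0$-graded independent set. 1. Let $c:B\to k_0$ be not identically zero and $m=\min\{v(c_b)+d(b): c_b\ne0\}$. Then $d(\sum_bc_bb)=m$ and $\mathfrak p(\sum_bc_bb)=\sum_b\lambda_b\mathfrak p(b)$, the sum over $b$ with $c_b\ne0$ and $v(c_b)+d(b)=m$, for some nonzero $\lambda_b\in\bar k$. 2. For every $i\in\mathbb Z$, $\mathfrak C_i\cap\big(\bigoplus_{b\in B}k_0\cdot b\big)=\bigoplus_{b\in B}\pi_0^{\lfloor(i-d-d(b)-1)/e_0\rfloor+1}O_{k_0}\cdot b$. II. For every $k_0$-vector subspace $L\subset K[G]$ there exists a $k_0$-graded independent set $B\subset L$ with $L=\bigoplus_{b\in B}k_0\cdot b$.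
   Context: $O_{k_0}$ is the ring of integers of $k_0$, $\pi_0$ a uniformizer of $k_0$, $\bar k$ the residue field of $K$, $r:O_K\to\bar k$ reduction, $v$ the valuation of $K$ with $v(K^* )=\mathbb Z$, $\pi$ a uniformizer of $K$, $n=[K:k]$, $d=v(\mathfrak D_{K/k})-n+1$, $c_\pi=\mathrm{Tr}_{K/k}(\pi^{-d})\in O_k^*$, $R=\bar k[X]/(X^n-1)$. $f=\sum a_\sigma\sigma\in K[G]$ acts by $f(x)=\sum a_\sigma\sigma(x)$; $\mathfrak C_i=\{f\in K[G]: v(f(x))-v(x)\ge i\ \forall x\in K^*\}$; for $f\in\mathfrak C_i$, $p_i(f)=r(c_\pi)^{-1}\sum_{j=0}^{n-1}r(f(\pi^{j-i})/\pi^j)X^j$; for $f\ne0$, $d(f)=i$ iff $f\in\mathfrak C_{i+d}\setminus\mathfrak C_{i+d+1}$, $\mathfrak p(f)=p_{d(f)+d}(f)$. For $B\subset K[G]\setminus\{0\}$, $B^0_s=\{f\in B: d(f)\equiv s\bmod e_0\}$; $B$ is $k_0$-graded independent if for every $s$ the family $(\mathfrak p(b))_{b\in B^0_s}$ is $\bar k$-linearly independent. *)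

theory Defs
  imports "HOL-Computational_Algebra.Polynomial" "HOL-Library.Function_Algebras"
begin

definition is_subfield :: "'a::field set \<Rightarrow> bool" where
  "is_subfield F \<longleftrightarrow> 0 \<in> F \<and> 1 \<in> F \<and> (\<forall>x\<in>F. \<forall>y\<in>F. x + y \<in> F \<and> x * y \<in> F)
     \<and> (\<forall>x\<in>F. - x \<in> F \<and> inverse x \<in> F)"

definition fam_indep :: "'s::zero set \<Rightarrow> ('s \<Rightarrow> 'v \<Rightarrow> 'v) \<Rightarrow> 'i set \<Rightarrow> ('i \<Rightarrow> 'v::comm_monoid_add) \<Rightarrow> bool" where
  "fam_indep F sm I x \<longleftrightarrow> (\<forall>T c. finite T \<and> T \<subseteq> I \<and> (\<forall>t\<in>T. c t \<in> F)
      \<and> (\<Sum>t\<in>T. sm (c t) (x t)) = 0 \<longrightarrow> (\<forall>t\<in>T. c t = 0))"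

definition fam_span :: "'s set \<Rightarrow> ('s \<Rightarrow> 'v \<Rightarrow> 'v) \<Rightarrow> 'i set \<Rightarrow> ('i \<Rightarrow> 'v::comm_monoid_add) \<Rightarrow> 'v set" where
  "fam_span F sm I x = {(\<Sum>t\<in>T. sm (c t) (x t)) | T c. finite T \<and> T \<subseteq> I \<and> (\<forall>t\<in>T. c t \<in> F)}"

definition is_subspace :: "'s set \<Rightarrow> ('s \<Rightarrow> 'v \<Rightarrow> 'v) \<Rightarrow> 'v::comm_monoid_add set \<Rightarrow> bool" where
  "is_subspace F sm L \<longleftrightarrow> 0 \<in> L \<and> (\<forall>x\<in>L. \<forall>y\<in>L. x + y \<in> L) \<and> (\<forall>c\<in>F. \<forall>x\<in>L. sm c x \<in> L)"

definition is_ext_deg :: "'a::field set \<Rightarrow> 'a set \<Rightarrow> nat \<Rightarrow> bool" where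
  "is_ext_deg F E n \<longleftrightarrow> (\<exists>Bs. finite Bs \<and> card Bs = n \<and> Bs \<subseteq> E \<and> fam_indep F (*) Bs id
      \<and> fam_span F (*) Bs id = E)"

definition ext_deg :: "'a::field set \<Rightarrow> 'a set \<Rightarrow> nat" where
  "ext_deg F E = (THE n. is_ext_deg F E n)"

text \<open>Normalized discrete valuation v with v(K^*) = Z; the value at 0 is irrelevant (never used).\<close>
definition discrete_val :: "('a::field \<Rightarrow> int) \<Rightarrow> bool" where
  "discrete_val v \<longleftrightarrow> (\<forall>x y. x \<noteq> 0 \<and> y \<noteq> 0 \<longrightarrow> v (x * y) = v x + v y)
     \<and> (\<forall>x y. x \<noteq> 0 \<and> y \<noteq> 0 \<and> x + y \<noteq> 0 \<longrightarrow> v (x + y) \<ge> min (v x) (v y))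
     \<and> (\<forall>z. \<exists>x. x \<noteq> 0 \<and> v x = z)"

definition vclose :: "('a::field \<Rightarrow> int) \<Rightarrow> int \<Rightarrow> 'a \<Rightarrow> 'a \<Rightarrow> bool" where
  "vclose v N x y \<longleftrightarrow> x = y \<or> v (x - y) \<ge> N"

definition v_complete :: "('a::field \<Rightarrow> int) \<Rightarrow> 'a set \<Rightarrow> bool" where
  "v_complete v F \<longleftrightarrow> (\<forall>s::nat \<Rightarrow> 'a. (\<forall>j. s j \<in> F) \<and> (\<forall>N. \<exists>M. \<forall>i\<ge>M. \<forall>j\<ge>M. vclose v N (s i) (s j))
      \<longrightarrow> (\<exists>l\<in>F. \<forall>N. \<exists>M. \<forall>j\<ge>M. vclose v N (s j) l))"

definition val_ring :: "('a::field \<Rightarrow> int) \<Rightarrow> 'a set" where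
  "val_ring v = {x. x = 0 \<or> v x \<ge> 0}"

definition is_residue_map :: "('a::field \<Rightarrow> int) \<Rightarrow> ('a \<Rightarrow> 'r::field) \<Rightarrow> bool" where
  "is_residue_map v r \<longleftrightarrow> (\<forall>x\<in>val_ring v. \<forall>y\<in>val_ring v. r (x + y) = r x + r y \<and> r (x * y) = r x * r y)
     \<and> r 1 = 1 \<and> (\<forall>z. \<exists>x\<in>val_ring v. r x = z)
     \<and> (\<forall>x\<in>val_ring v. r x = 0 \<longleftrightarrow> (x = 0 \<or> v x \<ge> 1))"

definition galois_group :: "'a::field set \<Rightarrow> ('a \<Rightarrow> 'a) set" where
  "galois_group k = {\<sigma>. bij \<sigma> \<and> (\<forall>x y. \<sigma> (x + y) = \<sigma> x + \<sigma> y \<and> \<sigma> (x * y) = \<sigma> x * \<sigma> y)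
      \<and> (\<forall>x\<in>k. \<sigma> x = x)}"

definition trace :: "('a \<Rightarrow> 'a) set \<Rightarrow> 'a::field \<Rightarrow> 'a" where
  "trace G x = (\<Sum>\<sigma>\<in>G. \<sigma> x)"

text \<open>Inverse different {x. Tr(x O_K) \<subseteq> O_k}; v(D) is the delta with codifferent = pi^(-delta) O_K.\<close>
definition codifferent :: "('a::field \<Rightarrow> int) \<Rightarrow> ('a \<Rightarrow> 'a) set \<Rightarrow> 'a set \<Rightarrow> 'a set" where
  "codifferent v G k = {x. \<forall>y\<in>val_ring v. trace G (x * y) \<in> val_ring v \<inter> k}"

definition diff_val :: "('a::field \<Rightarrow> int) \<Rightarrow> ('a \<Rightarrow> 'a) set \<Rightarrow> 'a set \<Rightarrow> int" where
  "diff_val v G k = (THE \<delta>. \<forall>x. x \<in> codifferent v G k \<longleftrightarrow> (x = 0 \<or> v x \<ge> - \<delta>))"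

text \<open>Elements of K[G]: functions G \<rightarrow> K (zero outside G).\<close>
definition inKG :: "('a \<Rightarrow> 'a) set \<Rightarrow> (('a \<Rightarrow> 'a) \<Rightarrow> 'a::field) \<Rightarrow> bool" where
  "inKG G f \<longleftrightarrow> (\<forall>\<sigma>. \<sigma> \<notin> G \<longrightarrow> f \<sigma> = 0)"

definition act :: "('a \<Rightarrow> 'a) set \<Rightarrow> (('a \<Rightarrow> 'a) \<Rightarrow> 'a::field) \<Rightarrow> 'a \<Rightarrow> 'a" where
  "act G f x = (\<Sum>\<sigma>\<in>G. f \<sigma> * \<sigma> x)"

definition kg_smult :: "'a::field \<Rightarrow> (('a \<Rightarrow> 'a) \<Rightarrow> 'a) \<Rightarrow> (('a \<Rightarrow> 'a) \<Rightarrow> 'a)" where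
  "kg_smult c f = (\<lambda>\<sigma>. c * f \<sigma>)"

definition Cset :: "('a::field \<Rightarrow> int) \<Rightarrow> ('a \<Rightarrow> 'a) set \<Rightarrow> int \<Rightarrow> (('a \<Rightarrow> 'a) \<Rightarrow> 'a) set" where
  "Cset v G i = {f. inKG G f \<and> (\<forall>x. x \<noteq> 0 \<longrightarrow> act G f x = 0 \<or> v (act G f x) - v x \<ge> i)}"

text \<open>p_i(f) in R = kbar[X]/(X^n-1), represented by its unique representative of degree < n.\<close>
definition pmap :: "('a \<Rightarrow> 'a) set \<Rightarrow> ('a::field \<Rightarrow> 'r::field) \<Rightarrow> nat \<Rightarrow> 'a \<Rightarrow> 'a \<Rightarrow> int
    \<Rightarrow> (('a \<Rightarrow> 'a) \<Rightarrow> 'a) \<Rightarrow> 'r poly" where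
  "pmap G r n \<pi> c\<pi> i f = smult (inverse (r c\<pi>))
      (\<Sum>j<n. monom (r (act G f (\<pi> powi (int j - i)) / \<pi> ^ j)) j)"

definition dval :: "('a::field \<Rightarrow> int) \<Rightarrow> ('a \<Rightarrow> 'a) set \<Rightarrow> int \<Rightarrow> (('a \<Rightarrow> 'a) \<Rightarrow> 'a) \<Rightarrow> int" where
  "dval v G dd f = (THE i. f \<in> Cset v G (i + dd) \<and> f \<notin> Cset v G (i + dd + 1))"

definition frakp :: "('a::field \<Rightarrow> int) \<Rightarrow> ('a \<Rightarrow> 'a) set \<Rightarrow> ('a \<Rightarrow> 'r::field) \<Rightarrow> nat \<Rightarrow> 'a \<Rightarrow> 'a \<Rightarrow> int
    \<Rightarrow> (('a \<Rightarrow> 'a) \<Rightarrow> 'a) \<Rightarrow> 'r poly" where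
  "frakp v G r n \<pi> c\<pi> dd f = pmap G r n \<pi> c\<pi> (dval v G dd f + dd) f"

definition graded_indep :: "('a::field \<Rightarrow> int) \<Rightarrow> ('a \<Rightarrow> 'a) set \<Rightarrow> ('a \<Rightarrow> 'r::field) \<Rightarrow> nat \<Rightarrow> 'a \<Rightarrow> 'a
    \<Rightarrow> int \<Rightarrow> nat \<Rightarrow> (('a \<Rightarrow> 'a) \<Rightarrow> 'a) set \<Rightarrow> bool" where
  "graded_indep v G r n \<pi> c\<pi> dd e0 B \<longleftrightarrow> B \<subseteq> {f. inKG G f \<and> f \<noteq> 0}
     \<and> (\<forall>s::int. fam_indep UNIV smult {b\<in>B. dval v G dd b mod int e0 = s mod int e0} (frakp v G r n \<pi> c\<pi> dd))"

end

theory Submission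
  imports Defs
begin

text \<open>
  Write \<open>d(f)\<close> for \<open>dval\<close> and \<open>P(f)\<close> for \<open>frakp\<close>. The maps \<open>p\<^sub>i\<close> are additive on
  \<open>C\<^sub>i\<close> and vanish exactly on \<open>C\<^bsub>i+1\<^esub>\<close>; scaling by \<open>c \<in> k\<close> shifts the index by \<open>v(c)\<close>
  and multiplies by the residue of the unit \<open>c * \<pi> powi (- v c)\<close>. (That \<open>c\<^sub>\<pi>\<close> is a unit
  comes from \<open>\<pi> powi (- d)\<close> lying on the edge of the codifferent.)

  I.1: every term \<open>c\<^sub>b b\<close> lies in \<open>C\<^bsub>m+d\<^esub>\<close>, those outside \<open>S\<close> even in \<open>C\<^bsub>m+d+1\<^esub>\<close>, so
  \<open>p\<^bsub>m+d\<^esub>\<close> of the sum is \<open>\<Sum>\<^bsub>b\<in>S\<^esub> \<lambda>\<^sub>b P(b)\<close>. Since \<open>v(k\<^sub>0 - {0}) = e\<^sub>0\<int>\<close>, all \<open>b \<in> S\<close>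
  have \<open>d(b) \<equiv> m\<close> mod \<open>e\<^sub>0\<close>, and graded independence makes this nonzero. I.2 is I.1
  read coefficientwise: the sum lies in \<open>C\<^sub>i\<close> iff \<open>v(c\<^sub>b) \<ge> i - d - d(b)\<close> for all \<open>b\<close>.

  II: graded independent sets have at most \<open>e\<^sub>0 n\<close> elements; take one of maximal size in
  \<open>L\<close>. By I.2 and completeness of \<open>k\<^sub>0\<close> its span is closed, so an \<open>f \<in> L\<close> outside the span
  has a best approximation \<open>h\<close>. If \<open>P(f - h)\<close> is a combination of the \<open>P(b)\<close> in its class,
  lifting the coefficients to \<open>k\<^sub>0\<close> improves \<open>h\<close>; otherwise \<open>f - h\<close> can be added to the set.
  Either way maximality is contradicted.
\<close>

lemma subfield_zero: "is_subfield F \<Longrightarrow> 0 \<in> F"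
  and subfield_one: "is_subfield F \<Longrightarrow> 1 \<in> F"
  and subfield_add: "is_subfield F \<Longrightarrow> x \<in> F \<Longrightarrow> y \<in> F \<Longrightarrow> x + y \<in> F"
  and subfield_mult: "is_subfield F \<Longrightarrow> x \<in> F \<Longrightarrow> y \<in> F \<Longrightarrow> x * y \<in> F"
  and subfield_uminus: "is_subfield F \<Longrightarrow> x \<in> F \<Longrightarrow> - x \<in> F"
  and subfield_inverse: "is_subfield F \<Longrightarrow> x \<in> F \<Longrightarrow> inverse x \<in> F"
  by (simp_all add: is_subfield_def)

lemma subfield_diff: "is_subfield F \<Longrightarrow> x \<in> F \<Longrightarrow> y \<in> F \<Longrightarrow> x - y \<in> F"
  by (metis diff_conv_add_uminus subfield_add subfield_uminus)

lemma subfield_divide: "is_subfield F \<Longrightarrow> x \<in> F \<Longrightarrow> y \<in> F \<Longrightarrow> x / y \<in> F"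
  by (metis divide_inverse subfield_mult subfield_inverse)

lemma subfield_sum: "is_subfield F \<Longrightarrow> (\<And>i. i \<in> T \<Longrightarrow> f i \<in> F) \<Longrightarrow> sum f T \<in> F"
  by (induction T rule: infinite_finite_induct) (auto simp: subfield_zero subfield_add)

lemma subfield_power: "is_subfield F \<Longrightarrow> x \<in> F \<Longrightarrow> x ^ m \<in> F"
  by (induction m) (auto simp: subfield_one subfield_mult)

lemma subfield_powi: "is_subfield F \<Longrightarrow> x \<in> F \<Longrightarrow> x powi m \<in> F"
  by (simp add: power_int_def subfield_power subfield_inverse)

lemma subfield_UNIV: "is_subfield (UNIV :: 'a::field set)"
  by (simp add: is_subfield_def)

lemma dvd_offset_eq:
  fixes a b :: int and i j E :: nat
  assumes "a + int i = b + int j" "int E dvd a" "int E dvd b" "i < E" "j < E"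
  shows "i = j"
proof -
  have "int E dvd int j - int i"
  proof -
    have "int j - int i = a - b" using assms(1) by linarith
    then show ?thesis using dvd_diff[OF assms(2,3)] by simp
  qed
  moreover have "\<bar>int j - int i\<bar> < int E" using assms(4,5) by linarith
  ultimately have "int j - int i = 0"
    using dvd_imp_le_int[of "int j - int i" "int E"] by (cases "int j - int i = 0") auto
  then show ?thesis by simp
qed

lemma dvd_nonneg_of_offset:
  fixes a :: int and i E :: nat
  assumes "int E dvd a" "0 \<le> a + int i" "i < E"
  shows "0 \<le> a"
proof -
  obtain q where q: "a = int E * q" using assms(1) by blast
  then have "int E * (-1) < int E * q" using assms(2,3) by linarith
  then have "-1 < q" using assms(3) by (simp only: mult_less_cancel_left_pos)
  then show ?thesis using q by simp
qed

lemma ceiling_div_times_ge: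
  fixes D :: int and e :: nat
  assumes "e > 0"
  shows "D \<le> ((D - 1) div int e + 1) * int e"
proof -
  have "D - 1 = int e * ((D - 1) div int e) + (D - 1) mod int e" by simp
  moreover have "(D - 1) mod int e < int e" using assms by simp
  moreover have "((D - 1) div int e + 1) * int e = int e * ((D - 1) div int e) + int e"
    by (simp add: algebra_simps)
  ultimately show ?thesis by linarith
qed

lemma ceiling_div_le:
  fixes D w :: int and e :: nat
  assumes "e > 0" "D \<le> int e * w"
  shows "(D - 1) div int e + 1 \<le> w"
proof -
  have "D - 1 = int e * ((D - 1) div int e) + (D - 1) mod int e" by simp
  moreover have "0 \<le> (D - 1) mod int e" using assms by simp
  ultimately have "int e * ((D - 1) div int e) < int e * w" using assms(2) by linarith
  then show ?thesis using assms(1) by (simp add: mult_less_cancel_left)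
qed


section \<open>Discrete valuations\<close>

definition val_ge :: "('a::field \<Rightarrow> int) \<Rightarrow> 'a \<Rightarrow> int \<Rightarrow> bool" where
  "val_ge v x N \<longleftrightarrow> x = 0 \<or> v x \<ge> N"

locale discrete_valuation =
  fixes v :: "'a::field \<Rightarrow> int"
  assumes dv: "discrete_val v"
begin

lemma v_mult: "x \<noteq> 0 \<Longrightarrow> y \<noteq> 0 \<Longrightarrow> v (x * y) = v x + v y"
  and v_add: "x \<noteq> 0 \<Longrightarrow> y \<noteq> 0 \<Longrightarrow> x + y \<noteq> 0 \<Longrightarrow> v (x + y) \<ge> min (v x) (v y)"
  and v_surj: "\<exists>x. x \<noteq> 0 \<and> v x = z"
  using dv by (simp_all add: discrete_val_def)

lemma v_one [simp]: "v 1 = 0"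
  using v_mult[of 1 1] by simp

lemma v_inverse: "x \<noteq> 0 \<Longrightarrow> v (inverse x) = - v x"
  using v_mult[of x "inverse x"] by simp

lemma v_divide: "x \<noteq> 0 \<Longrightarrow> y \<noteq> 0 \<Longrightarrow> v (x / y) = v x - v y"
  by (simp add: divide_inverse v_mult v_inverse)

lemma v_uminus [simp]: "v (- x) = v x"
proof (cases "x = 0")
  case False
  have "v (-1) = 0" using v_mult[of "-1" "-1"] by simp
  then show ?thesis using False v_mult[of "-1" x] by simp
qed simp

lemma v_power: "x \<noteq> 0 \<Longrightarrow> v (x ^ m) = int m * v x"
  by (induction m) (auto simp: v_mult algebra_simps)

lemma v_powi: "x \<noteq> 0 \<Longrightarrow> v (x powi m) = m * v x"
  by (cases "m \<ge> 0") (auto simp: power_int_def v_power v_inverse)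

lemma val_ge_zero [simp]: "val_ge v 0 N"
  by (simp add: val_ge_def)

lemma val_ge_self: "val_ge v x (v x)"
  by (simp add: val_ge_def)

lemma val_ge_mono: "val_ge v x N \<Longrightarrow> M \<le> N \<Longrightarrow> val_ge v x M"
  by (auto simp: val_ge_def)

lemma val_ge_add: "val_ge v x N \<Longrightarrow> val_ge v y N \<Longrightarrow> val_ge v (x + y) N"
  using v_add[of x y] by (cases "x = 0 \<or> y = 0 \<or> x + y = 0") (auto simp: val_ge_def)

lemma val_ge_uminus [simp]: "val_ge v (- x) N = val_ge v x N"
  by (simp add: val_ge_def)

lemma val_ge_diff: "val_ge v x N \<Longrightarrow> val_ge v y N \<Longrightarrow> val_ge v (x - y) N"
  by (metis diff_conv_add_uminus val_ge_add val_ge_uminus)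

lemma val_ge_sum: "(\<And>i. i \<in> T \<Longrightarrow> val_ge v (g i) N) \<Longrightarrow> val_ge v (sum g T) N"
  by (induction T rule: infinite_finite_induct) (auto intro: val_ge_add)

lemma val_ge_mult: "val_ge v x N \<Longrightarrow> val_ge v y M \<Longrightarrow> val_ge v (x * y) (N + M)"
  by (metis add_mono mult_eq_0_iff v_mult val_ge_def)

lemma val_ge_mult_iff: "y \<noteq> 0 \<Longrightarrow> val_ge v (x * y) N \<longleftrightarrow> val_ge v x (N - v y)"
  by (cases "x = 0") (auto simp: val_ge_def v_mult)

lemma val_ge_divide_iff: "w \<noteq> 0 \<Longrightarrow> val_ge v (x / w) N \<longleftrightarrow> val_ge v x (N + v w)"
  by (cases "x = 0") (auto simp: val_ge_def v_divide)

lemma val_ge_divide: "w \<noteq> 0 \<Longrightarrow> val_ge v x (N + v w) \<Longrightarrow> val_ge v (x / w) N"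
  using val_ge_divide_iff by blast

lemma v_add_strict:
  assumes "x \<noteq> 0" "val_ge v y (v x + 1)"
  shows "x + y \<noteq> 0 \<and> v (x + y) = v x"
proof (cases "y = 0")
  case False
  with assms have vy: "v y > v x" by (simp add: val_ge_def)
  have ne: "x + y \<noteq> 0"
  proof
    assume "x + y = 0"
    then have "y = - x" by (simp add: eq_neg_iff_add_eq_0 add.commute)
    with vy show False by simp
  qed
  have "v (x + y) \<ge> v x" using v_add[OF assms(1) False ne] vy by simp
  moreover have "v x \<ge> min (v (x + y)) (v y)"
    using v_add[of "x + y" "- y"] ne False assms(1) by simp
  ultimately show ?thesis using ne vy by auto
qed (use assms in simp)

lemma v_sum_distinct:
  assumes fin: "finite T" and ne: "T \<noteq> {}" and nz: "\<And>i. i \<in> T \<Longrightarrow> g i \<noteq> 0"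
    and inj: "inj_on (\<lambda>i. v (g i)) T"
  shows "sum g T \<noteq> 0 \<and> v (sum g T) = Min ((\<lambda>i. v (g i)) ` T)"
proof -
  define m where "m = Min ((\<lambda>i. v (g i)) ` T)"
  have "m \<in> (\<lambda>i. v (g i)) ` T" unfolding m_def using fin ne by simp
  then obtain i0 where i0: "i0 \<in> T" "v (g i0) = m" by auto
  have "v (g i) \<ge> m + 1" if "i \<in> T - {i0}" for i
  proof -
    have "v (g i) \<ge> m" unfolding m_def using fin that by simp
    moreover have "v (g i) \<noteq> m" using inj i0 that by (auto simp: inj_on_def)
    ultimately show ?thesis by simp
  qed
  then have "val_ge v (sum g (T - {i0})) (v (g i0) + 1)"
    using i0 by (intro val_ge_sum) (simp add: val_ge_def)
  then have "g i0 + sum g (T - {i0}) \<noteq> 0 \<and> v (g i0 + sum g (T - {i0})) = v (g i0)"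
    using v_add_strict[of "g i0"] nz[OF i0(1)] by blast
  moreover have "sum g T = g i0 + sum g (T - {i0})" using fin i0(1) by (simp add: sum.remove)
  ultimately show ?thesis using i0(2) m_def by simp
qed

lemma v_power_expansion:
  assumes dvd: "\<And>i. i < E \<Longrightarrow> a i \<noteq> 0 \<Longrightarrow> int E dvd v (a i)" and p: "p \<noteq> 0" "v p = 1"
    and ne: "\<exists>i<E. a i \<noteq> 0"
  defines "T \<equiv> {i. i < E \<and> a i \<noteq> 0}"
  shows "(\<Sum>i<E. a i * p ^ i) \<noteq> 0 \<and> v (\<Sum>i<E. a i * p ^ i) = Min ((\<lambda>i. v (a i * p ^ i)) ` T)"
proof -
  have vv: "v (a i * p ^ i) = v (a i) + int i" if "i \<in> T" for i
    using that p unfolding T_def by (simp add: v_mult v_power)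
  have "inj_on (\<lambda>i. v (a i * p ^ i)) T"
  proof (rule inj_onI)
    fix i j assume ij: "i \<in> T" "j \<in> T" "v (a i * p ^ i) = v (a j * p ^ j)"
    then show "i = j" using vv dvd unfolding T_def by (intro dvd_offset_eq[of "v (a i)" i "v (a j)" j E]) auto
  qed
  moreover have "(\<Sum>i<E. a i * p ^ i) = (\<Sum>i\<in>T. a i * p ^ i)"
    unfolding T_def by (rule sum.mono_neutral_right) auto
  moreover have "finite T" "T \<noteq> {}" using ne unfolding T_def by auto
  ultimately show ?thesis using v_sum_distinct[of T "\<lambda>i. a i * p ^ i"] p unfolding T_def by auto
qed

lemma val_ge_power_expansion_iff:
  assumes dvd: "\<And>i. i < E \<Longrightarrow> a i \<noteq> 0 \<Longrightarrow> int E dvd v (a i)" and p: "p \<noteq> 0" "v p = 1"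
  shows "val_ge v (\<Sum>i<E. a i * p ^ i) N \<longleftrightarrow> (\<forall>i<E. val_ge v (a i * p ^ i) N)"
proof
  assume h: "val_ge v (\<Sum>i<E. a i * p ^ i) N"
  show "\<forall>i<E. val_ge v (a i * p ^ i) N"
  proof (intro allI impI)
    fix i assume i: "i < E"
    show "val_ge v (a i * p ^ i) N"
    proof (cases "a i = 0")
      case False
      have "Min ((\<lambda>i. v (a i * p ^ i)) ` {i. i < E \<and> a i \<noteq> 0}) \<le> v (a i * p ^ i)"
        using i False by (intro Min_le) auto
      moreover have "(\<Sum>i<E. a i * p ^ i) \<noteq> 0 \<and>
          v (\<Sum>i<E. a i * p ^ i) = Min ((\<lambda>i. v (a i * p ^ i)) ` {i. i < E \<and> a i \<noteq> 0})"
        using v_power_expansion[of E a p, OF dvd p] i False by blast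
      ultimately show ?thesis using h by (auto simp: val_ge_def)
    qed simp
  qed
qed (auto intro: val_ge_sum)


lemma power_expansion_coeff_integral:
  assumes dvd: "\<And>i. i < E \<Longrightarrow> a i \<noteq> 0 \<Longrightarrow> int E dvd v (a i)" and p: "p \<noteq> 0" "v p = 1"
    and x: "val_ge v (\<Sum>i<E. a i * p ^ i) 0" and i: "i < E"
  shows "val_ge v (a i) 0"
proof (cases "a i = 0")
  case False
  have "val_ge v (a i * p ^ i) 0" using val_ge_power_expansion_iff[of E a p 0] dvd p x i by blast
  then have "0 \<le> v (a i) + int i" using False p by (simp add: val_ge_def v_mult v_power)
  then show ?thesis using dvd_nonneg_of_offset[OF dvd[OF i False] _ i] False by (simp add: val_ge_def)
qed simp

end

section \<open>Vector spaces over a subfield\<close>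

locale subfield_module =
  fixes F :: "'s::field set" and sm :: "'s \<Rightarrow> 'v::ab_group_add \<Rightarrow> 'v"
  assumes subF: "is_subfield F"
    and add_sm: "a \<in> F \<Longrightarrow> b \<in> F \<Longrightarrow> sm (a + b) x = sm a x + sm b x"
    and sm_add: "a \<in> F \<Longrightarrow> sm a (x + y) = sm a x + sm a y"
    and sm_mult: "a \<in> F \<Longrightarrow> b \<in> F \<Longrightarrow> sm (a * b) x = sm a (sm b x)"
    and sm_one: "sm 1 x = x"
begin

lemma F_zero: "0 \<in> F" and F_one: "1 \<in> F" using subF by (auto simp: subfield_zero subfield_one)

lemma sm_zero_left[simp]: "sm 0 x = 0"
  using add_sm[OF F_zero F_zero, of x] by simp

lemma sm_zero_right: "a \<in> F \<Longrightarrow> sm a 0 = 0"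
  using sm_add[of a 0 0] by simp

lemma sm_minus_left: "a \<in> F \<Longrightarrow> sm (- a) x = - sm a x"
proof -
  assume a: "a \<in> F"
  have "sm a x + sm (- a) x = 0" using add_sm[of a "-a" x] subF a by (simp add: subfield_uminus)
  then show ?thesis by (metis neg_eq_iff_add_eq_0)
qed

lemma sm_diff_left: "a \<in> F \<Longrightarrow> b \<in> F \<Longrightarrow> sm (a - b) x = sm a x - sm b x"
  using add_sm[of a "-b" x] subF by (simp add: subfield_uminus sm_minus_left)

lemma sm_minus_right: "a \<in> F \<Longrightarrow> sm a (- x) = - sm a x"
proof -
  assume a: "a \<in> F"
  have "sm a x + sm a (- x) = 0" using sm_add[of a x "-x"] a by (simp add: sm_zero_right)
  then show ?thesis by (metis neg_eq_iff_add_eq_0)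
qed

lemma sm_diff_right: "a \<in> F \<Longrightarrow> sm a (x - y) = sm a x - sm a y"
  using sm_add[of a x "-y"] by (simp add: sm_minus_right)

lemma sm_sum: "a \<in> F \<Longrightarrow> sm a (sum g T) = (\<Sum>t\<in>T. sm a (g t))"
  by (induction T rule: infinite_finite_induct) (auto simp: sm_zero_right sm_add)

lemma sum_sm: "(\<And>t. t \<in> T \<Longrightarrow> c t \<in> F) \<Longrightarrow> sm (sum c T) x = (\<Sum>t\<in>T. sm (c t) x)"
proof (induction T rule: infinite_finite_induct)
  case (insert t T)
  then show ?case using add_sm[of "c t" "sum c T" x] subF by (simp add: subfield_sum)
qed auto

lemma span_finite_iff:
  assumes "finite T"
  shows "x \<in> fam_span F sm T y \<longleftrightarrow> (\<exists>a. (\<forall>u\<in>T. a u \<in> F) \<and> x = (\<Sum>u\<in>T. sm (a u) (y u)))"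
proof
  assume "x \<in> fam_span F sm T y"
  then obtain T0 c where T0: "finite T0" "T0 \<subseteq> T" "\<forall>t\<in>T0. c t \<in> F" "x = (\<Sum>t\<in>T0. sm (c t) (y t))"
    unfolding fam_span_def by blast
  define a where "a = (\<lambda>u. if u \<in> T0 then c u else 0)"
  have "(\<Sum>u\<in>T. sm (a u) (y u)) = (\<Sum>u\<in>T0. sm (a u) (y u))"
    using T0 assms by (intro sum.mono_neutral_right) (auto simp: a_def)
  also have "\<dots> = x" using T0 by (simp add: a_def)
  finally show "\<exists>a. (\<forall>u\<in>T. a u \<in> F) \<and> x = (\<Sum>u\<in>T. sm (a u) (y u))"
    using T0 F_zero by (intro exI[of _ a]) (auto simp: a_def)
next
  assume "\<exists>a. (\<forall>u\<in>T. a u \<in> F) \<and> x = (\<Sum>u\<in>T. sm (a u) (y u))"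
  then show "x \<in> fam_span F sm T y" using assms unfolding fam_span_def by blast
qed

lemma span_intro: "finite T0 \<Longrightarrow> T0 \<subseteq> T \<Longrightarrow> \<forall>t\<in>T0. c t \<in> F \<Longrightarrow>
   x = (\<Sum>t\<in>T0. sm (c t) (y t)) \<Longrightarrow> x \<in> fam_span F sm T y"
  unfolding fam_span_def by blast

lemma span_zero: "0 \<in> fam_span F sm T y"
  unfolding fam_span_def by (rule CollectI, rule exI[of _ "{}"]) auto

lemma span_add: "x \<in> fam_span F sm T y \<Longrightarrow> z \<in> fam_span F sm T y \<Longrightarrow> x + z \<in> fam_span F sm T y"
proof -
  assume "x \<in> fam_span F sm T y" "z \<in> fam_span F sm T y"
  then obtain T1 c1 T2 c2 where 1: "finite T1" "T1 \<subseteq> T" "\<forall>t\<in>T1. c1 t \<in> F" "x = (\<Sum>t\<in>T1. sm (c1 t) (y t))"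
    and 2: "finite T2" "T2 \<subseteq> T" "\<forall>t\<in>T2. c2 t \<in> F" "z = (\<Sum>t\<in>T2. sm (c2 t) (y t))"
    unfolding fam_span_def by blast
  define a1 where "a1 = (\<lambda>u. if u \<in> T1 then c1 u else 0)"
  define a2 where "a2 = (\<lambda>u. if u \<in> T2 then c2 u else 0)"
  have fin: "finite (T1 \<union> T2)" using 1 2 by simp
  have "x = (\<Sum>u\<in>T1 \<union> T2. sm (a1 u) (y u))"
    using 1 fin by (subst sum.mono_neutral_right[of "T1 \<union> T2" T1]) (auto simp: a1_def)
  moreover have "z = (\<Sum>u\<in>T1 \<union> T2. sm (a2 u) (y u))"
    using 2 fin by (subst sum.mono_neutral_right[of "T1 \<union> T2" T2]) (auto simp: a2_def)
  ultimately have "x + z = (\<Sum>u\<in>T1 \<union> T2. sm (a1 u + a2 u) (y u))"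
    using 1 2 F_zero by (simp add: sum.distrib[symmetric] add_sm a1_def a2_def)
  moreover have "\<forall>u\<in>T1 \<union> T2. a1 u + a2 u \<in> F"
    using 1 2 F_zero subF by (auto simp: a1_def a2_def subfield_add)
  ultimately show ?thesis using fin 1 2 by (intro span_intro) auto
qed

lemma span_base: "t \<in> T \<Longrightarrow> y t \<in> fam_span F sm T y"
  using F_one by (intro span_intro[of "{t}" T "\<lambda>_. 1"]) (simp_all add: sm_one)

lemma span_mono: "T \<subseteq> T' \<Longrightarrow> fam_span F sm T y \<subseteq> fam_span F sm T' y"
proof
  fix x assume "T \<subseteq> T'" "x \<in> fam_span F sm T y"
  then obtain T1 c1 where 1: "finite T1" "T1 \<subseteq> T" "\<forall>t\<in>T1. c1 t \<in> F" "x = (\<Sum>t\<in>T1. sm (c1 t) (y t))"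
    unfolding fam_span_def by blast
  then show "x \<in> fam_span F sm T' y" using \<open>T \<subseteq> T'\<close> by (intro span_intro[of T1 T' c1]) auto
qed

lemma indep_mono: "S' \<subseteq> S \<Longrightarrow> fam_indep F sm S x \<Longrightarrow> fam_indep F sm S' x"
  unfolding fam_indep_def by (meson order_trans)

lemma indepI_finite:
  assumes "finite S"
    and "\<And>a. (\<forall>u\<in>S. a u \<in> F) \<Longrightarrow> (\<Sum>u\<in>S. sm (a u) (x u)) = 0 \<Longrightarrow> \<forall>u\<in>S. a u = 0"
  shows "fam_indep F sm S x"
  unfolding fam_indep_def
proof (intro allI impI)
  fix T c assume T: "finite T \<and> T \<subseteq> S \<and> (\<forall>t\<in>T. c t \<in> F) \<and> (\<Sum>t\<in>T. sm (c t) (x t)) = 0"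
  define a where "a = (\<lambda>u. if u \<in> T then c u else 0)"
  have "(\<Sum>u\<in>S. sm (a u) (x u)) = (\<Sum>u\<in>T. sm (a u) (x u))"
    using T assms(1) by (intro sum.mono_neutral_right) (auto simp: a_def)
  also have "\<dots> = 0" using T by (simp add: a_def)
  finally have az: "\<forall>u\<in>S. a u = 0" using assms(2)[of a] T F_zero by (auto simp: a_def)
  show "\<forall>t\<in>T. c t = 0"
  proof
    fix t assume t: "t \<in> T"
    then have "a t = 0" using az T by blast
    then show "c t = 0" using t by (simp add: a_def)
  qed
qed

lemma indepD:
  "fam_indep F sm S x \<Longrightarrow> finite T \<Longrightarrow> T \<subseteq> S \<Longrightarrow> (\<forall>t\<in>T. c t \<in> F) \<Longrightarrow>
    (\<Sum>t\<in>T. sm (c t) (x t)) = 0 \<Longrightarrow> t \<in> T \<Longrightarrow> c t = 0"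
  unfolding fam_indep_def by blast

lemma indep_remove_shear:
  assumes ind: "fam_indep F sm S x" and s0: "s0 \<in> S" and qF: "\<And>s. s \<in> S \<Longrightarrow> q s \<in> F"
  shows "fam_indep F sm (S - {s0}) (\<lambda>s. x s - sm (q s) (x s0))"
  unfolding fam_indep_def
proof (intro allI impI)
  fix T c
  assume T: "finite T \<and> T \<subseteq> S - {s0} \<and> (\<forall>t\<in>T. c t \<in> F)
    \<and> (\<Sum>t\<in>T. sm (c t) (x t - sm (q t) (x s0))) = 0"
  define c' where "c' s = (if s = s0 then - (\<Sum>u\<in>T. c u * q u) else c s)" for s
  have s0T: "s0 \<notin> T" using T by auto
  have sF: "(\<Sum>u\<in>T. c u * q u) \<in> F"
    using T qF subF by (auto intro!: subfield_sum subfield_mult)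
  have cF: "\<forall>u\<in>insert s0 T. c' u \<in> F"
    using T sF subF s0T by (auto simp: c'_def intro!: subfield_uminus)
  have "(\<Sum>t\<in>T. sm (c t) (x t - sm (q t) (x s0)))
      = (\<Sum>t\<in>T. sm (c t) (x t)) - (\<Sum>t\<in>T. sm (c t * q t) (x s0))"
    using T qF by (auto simp: sm_diff_right sm_mult sum_subtractf intro!: sum.cong)
  also have "(\<Sum>t\<in>T. sm (c t * q t) (x s0)) = sm (\<Sum>u\<in>T. c u * q u) (x s0)"
    using T qF subF by (subst sum_sm) (auto intro: subfield_mult)
  also have "(\<Sum>u\<in>T. sm (c u) (x u)) = (\<Sum>u\<in>T. sm (c' u) (x u))"
    using s0T by (intro sum.cong) (auto simp: c'_def)
  finally have "(\<Sum>u\<in>insert s0 T. sm (c' u) (x u)) = 0"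
    using T s0T sm_minus_left[OF sF] by (simp add: c'_def)
  then have "\<forall>u\<in>insert s0 T. c' u = 0"
    using indepD[OF ind, of "insert s0 T" c'] T s0 cF by auto
  then show "\<forall>t\<in>T. c t = 0" using s0T by (auto simp: c'_def split: if_splits)
qed

lemma span_eliminate:
  assumes fin: "finite T" and aF: "\<forall>u\<in>insert t T. a u \<in> F" and bF: "\<forall>u\<in>insert t T. b u \<in> F"
    and bt: "b t \<noteq> 0"
  shows "(sm (a t) (y t) + (\<Sum>u\<in>T. sm (a u) (y u)))
    - sm (a t / b t) (sm (b t) (y t) + (\<Sum>u\<in>T. sm (b u) (y u))) \<in> fam_span F sm T y"
proof -
  define q where "q = a t / b t"
  have qF: "q \<in> F" using aF bF subF unfolding q_def by (simp add: subfield_divide)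
  have "sm q (sm (b t) (y t) + (\<Sum>u\<in>T. sm (b u) (y u))) = sm (a t) (y t) + (\<Sum>u\<in>T. sm (q * b u) (y u))"
    using qF bF bt by (simp add: sm_add sm_sum sm_mult[symmetric] q_def)
  then have "(sm (a t) (y t) + (\<Sum>u\<in>T. sm (a u) (y u))) - sm q (sm (b t) (y t) + (\<Sum>u\<in>T. sm (b u) (y u)))
      = (\<Sum>u\<in>T. sm (a u - q * b u) (y u))"
    using aF bF qF subF by (simp add: sum_subtractf[symmetric] sm_diff_left subfield_mult)
  moreover have "\<forall>u\<in>T. a u - q * b u \<in> F" using aF bF qF subF by (auto intro!: subfield_diff subfield_mult)
  ultimately show ?thesis using fin unfolding q_def by (subst span_finite_iff) auto
qed

lemma indep_span_insert_reduce:
  fixes S :: "'i set"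
  assumes T: "finite T" "t \<notin> T" and S: "finite S" and ind: "fam_indep F sm S x"
    and sp: "\<forall>s\<in>S. x s \<in> fam_span F sm (insert t T) y"
  shows "\<exists>S' :: 'i set. \<exists>x'. finite S' \<and> card S \<le> Suc (card S') \<and> fam_indep F sm S' x'
    \<and> (\<forall>s\<in>S'. x' s \<in> fam_span F sm T y)"
proof -
  have "\<forall>s\<in>S. \<exists>a. (\<forall>u\<in>insert t T. a u \<in> F) \<and> x s = (\<Sum>u\<in>insert t T. sm (a u) (y u))"
    using sp T by (simp add: span_finite_iff[of "insert t T"])
  then obtain a where a: "\<And>s. s \<in> S \<Longrightarrow> (\<forall>u\<in>insert t T. a s u \<in> F) \<and>
        x s = (\<Sum>u\<in>insert t T. sm (a s u) (y u))"
    by metis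
  have xs: "x s = sm (a s t) (y t) + (\<Sum>u\<in>T. sm (a s u) (y u))" if "s \<in> S" for s
    using a[OF that] T by simp
  show ?thesis
  proof (cases "\<forall>s\<in>S. a s t = 0")
    case True
    have "\<forall>s\<in>S. x s \<in> fam_span F sm T y"
    proof
      fix s assume s: "s \<in> S"
      have "x s = (\<Sum>u\<in>T. sm (a s u) (y u))" using xs[OF s] True s by simp
      then show "x s \<in> fam_span F sm T y" using a[OF s] T(1) by (subst span_finite_iff) auto
    qed
    then have "finite S \<and> card S \<le> Suc (card S) \<and> fam_indep F sm S x \<and> (\<forall>s\<in>S. x s \<in> fam_span F sm T y)"
      using S ind by simp
    then show ?thesis by (intro exI[of _ S] exI[of _ x])
  next
    case False
    then obtain s0 where s0: "s0 \<in> S" "a s0 t \<noteq> 0" by auto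
    define q where "q s = a s t / a s0 t" for s
    define x' where "x' s = x s - sm (q s) (x s0)" for s
    have qF: "q s \<in> F" if "s \<in> S" for s
      using a[OF that] a[OF s0(1)] subF unfolding q_def by (simp add: subfield_divide)
    have "\<forall>s\<in>S - {s0}. x' s \<in> fam_span F sm T y"
    proof
      fix s assume s: "s \<in> S - {s0}"
      then show "x' s \<in> fam_span F sm T y"
        using span_eliminate[OF T(1), of t "a s" "a s0" y] a s0 T
        unfolding x'_def q_def xs[OF s0(1)] by auto
    qed
    moreover have "fam_indep F sm (S - {s0}) x'"
      unfolding x'_def using indep_remove_shear[OF ind s0(1)] qF by blast
    moreover have "card S \<le> Suc (card (S - {s0}))" using S s0 by (simp add: card_Diff_singleton)
    ultimately have "finite (S - {s0}) \<and> card S \<le> Suc (card (S - {s0})) \<and> fam_indep F sm (S - {s0}) x'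
        \<and> (\<forall>s\<in>S - {s0}. x' s \<in> fam_span F sm T y)"
      using S by simp
    then show ?thesis by (intro exI[of _ "S - {s0}"] exI[of _ x'])
  qed
qed

lemma indep_card_le_finite:
  fixes S :: "'i set"
  assumes "finite T"
  shows "finite S \<Longrightarrow> fam_indep F sm S x \<Longrightarrow> (\<forall>s\<in>S. x s \<in> fam_span F sm T y) \<Longrightarrow> card S \<le> card T"
  using assms
proof (induction T arbitrary: S x rule: finite_induct)
  case empty
  show ?case
  proof (cases "S = {}")
    case False
    then obtain s where s: "s \<in> S" by auto
    have "x s = 0" using empty.prems(3) s by (simp add: span_finite_iff)
    then have "(1::'s) = 0"
      using indepD[OF empty.prems(2), of "{s}" "\<lambda>_. 1" s] s F_one by (simp add: sm_one)
    then show ?thesis by simp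
  qed simp
next
  case (insert t T S x)
  obtain S' :: "'i set" and x' where S': "finite S'" "card S \<le> Suc (card S')" "fam_indep F sm S' x'"
    "\<forall>s\<in>S'. x' s \<in> fam_span F sm T y"
    using indep_span_insert_reduce[OF insert.hyps(1,2) insert.prems] by blast
  then have "card S' \<le> card T" using insert.IH by blast
  then show ?case using insert.hyps S'(2) by simp
qed

lemma indep_card_le:
  assumes ind: "fam_indep F sm S x" and fin: "finite T" and sp: "\<forall>s\<in>S. x s \<in> fam_span F sm T y"
  shows "finite S \<and> card S \<le> card T"
proof -
  have "finite S"
  proof (rule ccontr)
    assume "infinite S"
    then obtain S' where S': "S' \<subseteq> S" "finite S'" "card S' = Suc (card T)"
      by (meson infinite_arbitrarily_large)
    then have "card S' \<le> card T" using indep_card_le_finite[OF fin S'(2)] indep_mono[OF S'(1) ind] sp by blast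
    then show False using S' by simp
  qed
  then show ?thesis using indep_card_le_finite[OF fin _ ind] sp by blast
qed

lemma indep_insert:
  assumes ind: "fam_indep F sm S x" and nsp: "x t \<notin> fam_span F sm S x" and tS: "t \<notin> S"
  shows "fam_indep F sm (insert t S) x"
  unfolding fam_indep_def
proof (intro allI impI)
  fix T c assume T: "finite T \<and> T \<subseteq> insert t S \<and> (\<forall>t\<in>T. c t \<in> F) \<and> (\<Sum>t\<in>T. sm (c t) (x t)) = 0"
  show "\<forall>u\<in>T. c u = 0"
  proof (cases "t \<in> T")
    case False
    then show ?thesis using T ind unfolding fam_indep_def by blast
  next
    case True
    have ct: "c t = 0"
    proof (rule ccontr)
      assume ne: "c t \<noteq> 0"
      have "(\<Sum>u\<in>T. sm (c u) (x u)) = sm (c t) (x t) + (\<Sum>u\<in>T - {t}. sm (c u) (x u))"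
        using T True by (intro sum.remove) auto
      then have "sm (c t) (x t) + (\<Sum>u\<in>T - {t}. sm (c u) (x u)) = 0"
        using T by simp
      then have "sm (c t) (x t) = - (\<Sum>u\<in>T - {t}. sm (c u) (x u))"
        by (simp add: eq_neg_iff_add_eq_0)
      then have "sm (inverse (c t)) (sm (c t) (x t)) = (\<Sum>u\<in>T - {t}. sm (- (inverse (c t) * c u)) (x u))"
        using T True subF by (simp add: sm_minus_right sm_sum sm_mult sm_minus_left subfield_inverse subfield_mult
            sum_negf)
      moreover have "sm (inverse (c t)) (sm (c t) (x t)) = x t"
        using T True subF ne by (simp add: sm_mult[symmetric] subfield_inverse sm_one)
      ultimately have "x t \<in> fam_span F sm S x"
        using T True subF unfolding fam_span_def
        by (intro CollectI exI[of _ "T - {t}"] exI[of _ "\<lambda>u. - (inverse (c t) * c u)"])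
          (auto intro!: subfield_uminus subfield_mult subfield_inverse)
      then show False using nsp by simp
    qed
    have "(\<Sum>u\<in>T. sm (c u) (x u)) = sm (c t) (x t) + (\<Sum>u\<in>T - {t}. sm (c u) (x u))"
      using T True by (intro sum.remove) auto
    then have "(\<Sum>u\<in>T - {t}. sm (c u) (x u)) = 0" using T ct by simp
    then have "\<forall>u\<in>T - {t}. c u = 0" using T ind unfolding fam_indep_def by blast
    then show ?thesis using ct by auto
  qed
qed

lemma indep_image_id:
  assumes inj: "inj_on f I" and ind: "fam_indep F sm I f"
  shows "fam_indep F sm (f ` I) id"
  unfolding fam_indep_def
proof (intro allI impI)
  fix S c assume S: "finite S \<and> S \<subseteq> f ` I \<and> (\<forall>t\<in>S. c t \<in> F) \<and> (\<Sum>t\<in>S. sm (c t) (id t)) = 0"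
  define S' where "S' = {i\<in>I. f i \<in> S}"
  have SS': "S = f ` S'" using S unfolding S'_def by auto
  have injS: "inj_on f S'" using inj unfolding S'_def by (auto simp: inj_on_def)
  have "finite S'" using S SS' finite_image_iff[OF injS] by simp
  moreover have "(\<Sum>i\<in>S'. sm (c (f i)) (f i)) = 0"
    using S sum.reindex[OF injS, of "\<lambda>t. sm (c t) t"] SS' by simp
  ultimately have "\<forall>i\<in>S'. c (f i) = 0"
    using indepD[OF ind, of S' "\<lambda>i. c (f i)"] S unfolding S'_def by auto
  then show "\<forall>t\<in>S. c t = 0" using SS' by auto
qed

lemma span_self: "S \<subseteq> fam_span F sm S id"
  using span_base[of _ S id] by auto

lemma span_indep_of_card_ge:
  assumes fS: "finite S" and ind: "fam_indep F sm S id" and fT: "finite T"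
    and card: "card T \<le> card S" and V: "V \<subseteq> fam_span F sm T y" and SV: "S \<subseteq> V"
  shows "V \<subseteq> fam_span F sm S id"
proof
  fix w assume w: "w \<in> V"
  show "w \<in> fam_span F sm S id"
  proof (rule ccontr)
    assume nw: "w \<notin> fam_span F sm S id"
    then have wS: "w \<notin> S" using span_self by auto
    have "fam_indep F sm (insert w S) id" using indep_insert[OF ind _ wS] nw by simp
    moreover have "\<forall>s\<in>insert w S. id s \<in> fam_span F sm T y" using V SV w by auto
    ultimately have "card (insert w S) \<le> card T" using indep_card_le[OF _ fT] by blast
    then show False using card wS fS by simp
  qed
qed

end

lemma subfield_module_mult: "is_subfield F \<Longrightarrow> subfield_module F ((*) :: 'a::field \<Rightarrow> 'a \<Rightarrow> 'a)"
  by unfold_locales (simp_all add: algebra_simps)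

lemma subfield_module_smult: "subfield_module (UNIV :: 'a::field set) smult"
  by unfold_locales (simp_all add: subfield_UNIV smult_add_left smult_add_right)

lemma ext_deg_eqI:
  assumes F: "is_subfield F" and h: "is_ext_deg F E m"
  shows "ext_deg F E = m"
proof -
  interpret subfield_module F "(*)" by (rule subfield_module_mult[OF F])
  have uniq: "m' = m" if h': "is_ext_deg F E m'" for m'
  proof -
    obtain B where B: "finite B" "card B = m" "B \<subseteq> E" "fam_indep F (*) B id" "fam_span F (*) B id = E"
      using h unfolding is_ext_deg_def by blast
    obtain B' where B': "finite B'" "card B' = m'" "B' \<subseteq> E" "fam_indep F (*) B' id" "fam_span F (*) B' id = E"
      using h' unfolding is_ext_deg_def by blast
    have "card B \<le> card B'" using indep_card_le[OF B(4) B'(1)] B(3) B'(5) by auto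
    moreover have "card B' \<le> card B" using indep_card_le[OF B'(4) B(1)] B'(3) B(5) by auto
    ultimately show ?thesis using B(2) B'(2) by linarith
  qed
  show ?thesis unfolding ext_deg_def by (rule the_equality[where P = "is_ext_deg F E", OF h]) (rule uniq)
qed

lemma ext_deg_pos:
  assumes F: "is_subfield F" and h: "is_ext_deg F E m" and one: "1 \<in> E"
  shows "m > 0"
proof (rule ccontr)
  interpret subfield_module F "(*)" by (rule subfield_module_mult[OF F])
  assume "\<not> m > 0"
  then obtain B where "B = {}" "fam_span F (*) B id = E"
    using h unfolding is_ext_deg_def by auto
  then show False using one span_finite_iff[of "{}" 1 id] by simp
qed

lemma subfield_module_kg_smult:
  "is_subfield F \<Longrightarrow> subfield_module F (kg_smult :: 'a::field \<Rightarrow> (('a \<Rightarrow> 'a) \<Rightarrow> 'a) \<Rightarrow> _)"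
  by unfold_locales (simp_all add: kg_smult_def fun_eq_iff algebra_simps)

lemma kg_smult_sum: "(\<Sum>b\<in>B. kg_smult (c b) b) = (\<lambda>\<sigma>. \<Sum>b\<in>B. c b * b \<sigma>)"
  by (induction B rule: infinite_finite_induct) (simp_all add: kg_smult_def fun_eq_iff zero_fun_def)

context discrete_valuation
begin

lemma powers_indep:
  assumes F: "is_subfield F" and dvd: "\<forall>a\<in>F - {0}. int E dvd v a" and p: "p \<noteq> 0" "v p = 1"
  shows "fam_indep F (*) {..<E} (\<lambda>i. p ^ i)"
proof -
  interpret subfield_module F "(*)" by (rule subfield_module_mult[OF F])
  show ?thesis
  proof (rule indepI_finite)
    fix a assume "\<forall>u\<in>{..<E}. a u \<in> F" "(\<Sum>u\<in>{..<E}. a u * p ^ u) = 0"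
    then show "\<forall>u\<in>{..<E}. a u = 0" using v_power_expansion[of E a p] dvd p by auto
  qed simp
qed

lemma powers_basis:
  assumes F: "is_subfield F" and dvd: "\<forall>a\<in>F - {0}. int E dvd v a" and p: "p \<noteq> 0" "v p = 1"
    and T: "finite T" "card T \<le> E" "\<forall>x. x \<in> fam_span F (*) T y"
  shows "is_ext_deg F UNIV E" and "\<forall>x. \<exists>a. (\<forall>i<E. a i \<in> F) \<and> x = (\<Sum>i<E. a i * p ^ i)"
proof -
  interpret subfield_module F "(*)" by (rule subfield_module_mult[OF F])
  define P where "P = (\<lambda>i. p ^ i) ` {..<E}"
  have inj: "inj_on (\<lambda>i. p ^ i) {..<E}"
    using p by (intro inj_onI) (metis v_power of_nat_eq_iff mult.right_neutral)
  have fP: "finite P" and cP: "card P = E" unfolding P_def using card_image[OF inj] by auto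
  have ind: "fam_indep F (*) P id"
    unfolding P_def using indep_image_id[OF inj powers_indep[OF F dvd p]] .
  have sp: "UNIV \<subseteq> fam_span F (*) P id"
    using span_indep_of_card_ge[OF fP ind T(1)] T(2,3) cP by auto
  then show "is_ext_deg F UNIV E" unfolding is_ext_deg_def
    using ind cP fP by (intro exI[of _ P]) auto
  show "\<forall>x. \<exists>a. (\<forall>i<E. a i \<in> F) \<and> x = (\<Sum>i<E. a i * p ^ i)"
  proof
    fix x
    obtain a where a: "\<forall>u\<in>P. a u \<in> F" "x = (\<Sum>u\<in>P. a u * u)"
      using sp span_finite_iff[OF fP, of x id] by auto
    then have "x = (\<Sum>i<E. a (p ^ i) * p ^ i)"
      using sum.reindex[OF inj, of "\<lambda>u. a u * u"] unfolding P_def by simp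
    then show "\<exists>a. (\<forall>i<E. a i \<in> F) \<and> x = (\<Sum>i<E. a i * p ^ i)"
      using a(1) unfolding P_def by (intro exI[of _ "\<lambda>i. a (p ^ i)"]) auto
  qed
qed

end

section \<open>The tower \<open>k\<^sub>0 \<subseteq> k \<subseteq> K\<close>\<close>

locale ramified_tower = discrete_valuation v for v :: "'K::field \<Rightarrow> int" +
  fixes k k0 :: "'K set" and \<pi> \<pi>0 :: 'K and n e0 :: nat
  assumes sub_k: "is_subfield k" and sub_k0: "is_subfield k0" and k0k: "k0 \<subseteq> k"
    and fin_Kk: "\<exists>m. is_ext_deg k UNIV m" and fin_kk0: "\<exists>m. is_ext_deg k0 k m"
    and n_def: "n = ext_deg k UNIV"
    and totram_Kk: "v ` (k - {0}) = {int n * z | z. True}"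
    and totram_kk0: "v ` (k0 - {0}) = {int (ext_deg k0 k) * int n * z | z. True}"
    and e0_def: "e0 = ext_deg k0 UNIV"
    and unif: "\<pi> \<noteq> 0" "v \<pi> = 1"
    and unif0: "\<pi>0 \<in> k0" "\<pi>0 \<noteq> 0" "v \<pi>0 > 0" "\<forall>x\<in>k0 - {0}. v x > 0 \<longrightarrow> v \<pi>0 \<le> v x"
begin

lemma k0_sub_k: "a \<in> k0 \<Longrightarrow> a \<in> k"
  using k0k by blast

lemma n_dvd_v_k: "\<forall>a\<in>k - {0}. int n dvd v a"
proof
  fix a assume "a \<in> k - {0}"
  then have "v a \<in> v ` (k - {0})" by blast
  then show "int n dvd v a" using totram_Kk by auto
qed

lemma pi_powi_nz: "\<pi> powi m \<noteq> 0"
  using unif by (simp add: power_int_not_zero)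

lemma v_pi_powi: "v (\<pi> powi m) = m"
  using unif by (simp add: v_powi)

lemma pi_powi_add: "\<pi> powi (a + b) = \<pi> powi a * \<pi> powi b"
  using unif by (simp add: power_int_add)

lemma k_element_of_val_n: "\<exists>\<rho>. \<rho> \<in> k \<and> \<rho> \<noteq> 0 \<and> v \<rho> = int n"
proof -
  have "int n * 1 \<in> v ` (k - {0})" using totram_Kk by blast
  then obtain \<rho> where "\<rho> \<in> k - {0}" "int n * 1 = v \<rho>" by (rule imageE)
  then show ?thesis by auto
qed

lemma ext_deg_k_UNIV: "is_ext_deg k UNIV n"
  using fin_Kk ext_deg_eqI[OF sub_k] n_def by auto

lemma n_pos: "n > 0"
  using ext_deg_pos[OF sub_k ext_deg_k_UNIV] by simp

lemma pi_expansion_k: "\<exists>a. (\<forall>i<n. a i \<in> k) \<and> x = (\<Sum>i<n. a i * \<pi> ^ i)"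
proof -
  obtain B where B: "finite B" "card B = n" "\<forall>x. x \<in> fam_span k (*) B id"
    using ext_deg_k_UNIV unfolding is_ext_deg_def by auto
  show ?thesis using powers_basis(2)[OF sub_k n_dvd_v_k unif B(1)] B by auto
qed

lemma val_ge_pi_expansion_iff:
  "\<forall>i<n. a i \<in> k \<Longrightarrow> val_ge v (\<Sum>i<n. a i * \<pi> ^ i) N \<longleftrightarrow> (\<forall>i<n. val_ge v (a i * \<pi> ^ i) N)"
  using val_ge_power_expansion_iff[of n a \<pi> N] n_dvd_v_k unif by blast

lemma span_k0_products:
  assumes A: "finite A" "fam_span k0 (*) A id = k"
  shows "x \<in> fam_span k0 (*) (A \<times> {..<n}) (\<lambda>(a, i). a * \<pi> ^ i)"
proof -
  interpret subfield_module k0 "(*)" by (rule subfield_module_mult[OF sub_k0])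
  obtain b where b: "\<forall>i<n. b i \<in> k" "x = (\<Sum>i<n. b i * \<pi> ^ i)" using pi_expansion_k by blast
  have "\<forall>i\<in>{..<n}. \<exists>c. (\<forall>u\<in>A. c u \<in> k0) \<and> b i = (\<Sum>u\<in>A. c u * u)"
    using b(1) A span_finite_iff[OF A(1)] by auto
  then obtain c where c: "\<And>i. i \<in> {..<n} \<Longrightarrow> (\<forall>u\<in>A. c i u \<in> k0) \<and> b i = (\<Sum>u\<in>A. c i u * u)"
    by metis
  have "x = (\<Sum>i<n. \<Sum>u\<in>A. c i u * (u * \<pi> ^ i))"
    using b c by (simp add: sum_distrib_right mult.assoc)
  also have "\<dots> = (\<Sum>u\<in>A. \<Sum>i<n. c i u * (u * \<pi> ^ i))" by (rule sum.swap)
  also have "\<dots> = (\<Sum>q\<in>A \<times> {..<n}. (\<lambda>(u, i). c i u) q * (\<lambda>(a, i). a * \<pi> ^ i) q)"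
    by (subst sum.cartesian_product) (simp add: case_prod_beta)
  finally show ?thesis
    using c A(1) by (subst span_finite_iff) (auto intro!: exI[of _ "\<lambda>(u, i). c i u"])
qed

lemma tower_degree_and_expansion:
  "e0 = ext_deg k0 k * n \<and> (\<forall>a\<in>k0 - {0}. int e0 dvd v a)
     \<and> (\<forall>x. \<exists>a. (\<forall>i<e0. a i \<in> k0) \<and> x = (\<Sum>i<e0. a i * \<pi> ^ i))"
proof -
  obtain A where A: "finite A" "card A = ext_deg k0 k" "fam_span k0 (*) A id = k"
    using fin_kk0 ext_deg_eqI[OF sub_k0] unfolding is_ext_deg_def by metis
  define E where "E = ext_deg k0 k * n"
  have dvd: "\<forall>a\<in>k0 - {0}. int E dvd v a"
  proof
    fix a assume "a \<in> k0 - {0}"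
    then have "v a \<in> v ` (k0 - {0})" by blast
    then show "int E dvd v a" using totram_kk0 unfolding E_def by auto
  qed
  have card: "card (A \<times> {..<n}) \<le> E" using A unfolding E_def by (simp add: card_cartesian_product)
  have fin: "finite (A \<times> {..<n})" using A(1) by simp
  note basis = powers_basis[OF sub_k0 dvd unif fin card allI[OF span_k0_products[OF A(1,3)]]]
  have "e0 = E" using ext_deg_eqI[OF sub_k0 basis(1)] e0_def by simp
  then show ?thesis using basis(2) dvd unfolding E_def by simp
qed

lemma e0_pos: "e0 > 0"
proof -
  obtain m where "is_ext_deg k0 k m" using fin_kk0 by blast
  then have "ext_deg k0 k > 0"
    using ext_deg_eqI[OF sub_k0] ext_deg_pos[OF sub_k0] sub_k subfield_one by metis
  then show ?thesis using tower_degree_and_expansion n_pos by simp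
qed

lemma e0_dvd_v_k0: "a \<in> k0 \<Longrightarrow> a \<noteq> 0 \<Longrightarrow> int e0 dvd v a"
  using tower_degree_and_expansion by blast

lemma pi_expansion_k0: "\<exists>a. (\<forall>i<e0. a i \<in> k0) \<and> x = (\<Sum>i<e0. a i * \<pi> ^ i)"
  using tower_degree_and_expansion by blast

lemma v_pi0: "v \<pi>0 = int e0"
proof -
  have "int (ext_deg k0 k) * int n * 1 \<in> v ` (k0 - {0})" using totram_kk0 by blast
  then obtain a where "a \<in> k0 - {0}" "int (ext_deg k0 k) * int n * 1 = v a" by (rule imageE)
  then have a: "a \<in> k0 - {0}" "v a = int e0" using tower_degree_and_expansion by auto
  have "v \<pi>0 \<le> int e0" using unif0(4)[rule_format, of a] a e0_pos by simp
  moreover obtain q where "v \<pi>0 = int e0 * q" using e0_dvd_v_k0[OF unif0(1,2)] by blast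
  ultimately show ?thesis using unif0(3) e0_pos
    by (metis dual_order.antisym mult.right_neutral mult_le_cancel_left_pos of_nat_0_less_iff
        zero_less_mult_pos int_one_le_iff_zero_less)
qed

lemma approx_by_k0:
  assumes x: "val_ge v x 0"
  shows "\<exists>a\<in>k0. val_ge v a 0 \<and> val_ge v (x - a) 1"
proof -
  obtain a where a: "\<forall>i<e0. a i \<in> k0" "x = (\<Sum>i<e0. a i * \<pi> ^ i)" using pi_expansion_k0 by blast
  have integral: "val_ge v (a i) 0" if "i < e0" for i
    using power_expansion_coeff_integral[of e0 a \<pi>] e0_dvd_v_k0 a unif x that by auto
  have "val_ge v (a i * \<pi> ^ i) 1" if i: "1 \<le> i" "i < e0" for i
  proof -
    have "val_ge v (a i * \<pi> ^ i) (0 + int i)"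
      using val_ge_mult[OF integral[OF i(2)] val_ge_self[of "\<pi> ^ i"]] unif by (simp add: v_power)
    then show ?thesis using i val_ge_mono by fastforce
  qed
  moreover have "x - a 0 = (\<Sum>i\<in>{1..<e0}. a i * \<pi> ^ i)"
  proof -
    have "{..<e0} = insert 0 {1..<e0}" using e0_pos by auto
    then show ?thesis using a(2) by simp
  qed
  ultimately have "val_ge v (x - a 0) 1" by (auto intro!: val_ge_sum)
  then show ?thesis using integral[of 0] a(1) e0_pos by auto
qed

end

section \<open>The Galois group and the trace\<close>

lemma dedekind_independence:
  fixes H :: "('a::field \<Rightarrow> 'a) set"
  assumes "finite H" and "\<forall>\<sigma>\<in>H. \<forall>x y. \<sigma> (x * y) = \<sigma> x * \<sigma> y" and "\<forall>\<sigma>\<in>H. \<sigma> 1 = 1"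
  shows "(\<forall>x. (\<Sum>\<sigma>\<in>H. c \<sigma> * \<sigma> x) = 0) \<Longrightarrow> \<forall>\<sigma>\<in>H. c \<sigma> = 0"
  using assms
proof (induction H arbitrary: c rule: finite_induct)
  case (insert \<tau> H c)
  have R: "(\<Sum>\<sigma>\<in>H. c \<sigma> * \<sigma> x) = - (c \<tau> * \<tau> x)" for x
    using insert.prems(1) insert.hyps by (simp add: eq_neg_iff_add_eq_0 add.commute)
  have "c \<rho> * (\<rho> y - \<tau> y) = 0" if "\<rho> \<in> H" for \<rho> y
  proof -
    have "(\<Sum>\<rho>\<in>H. (c \<rho> * (\<rho> y - \<tau> y)) * \<rho> x)
        = (\<Sum>\<rho>\<in>H. c \<rho> * \<rho> (y * x) - \<tau> y * (c \<rho> * \<rho> x))" for x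
      using insert.prems(2) by (intro sum.cong) (simp_all add: algebra_simps)
    also have "\<dots> x = (\<Sum>\<rho>\<in>H. c \<rho> * \<rho> (y * x)) - \<tau> y * (\<Sum>\<rho>\<in>H. c \<rho> * \<rho> x)" for x
      by (simp add: sum_subtractf sum_distrib_left)
    also have "\<dots> x = 0" for x unfolding R using insert.prems(2) by (simp add: algebra_simps)
    finally show ?thesis using insert.IH[of "\<lambda>\<rho>. c \<rho> * (\<rho> y - \<tau> y)"] insert.prems that by blast
  qed
  moreover have "\<sigma> \<noteq> \<tau> \<Longrightarrow> \<exists>y. \<sigma> y \<noteq> \<tau> y" for \<sigma> by (meson ext)
  ultimately have H0: "\<forall>\<sigma>\<in>H. c \<sigma> = 0" using insert.hyps(2) by (metis eq_iff_diff_eq_0 mult_eq_0_iff)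
  then have "c \<tau> * \<tau> 1 = 0" using R[of 1] by simp
  then show ?case using H0 insert.prems(3) by simp
qed simp


lemma nontrivial_solution_exists:
  fixes w :: "'j \<Rightarrow> 'i \<Rightarrow> 'a::field"
  assumes fI: "finite I" and lt: "card I < card J"
  shows "\<exists>T c. finite T \<and> T \<subseteq> J \<and> (\<exists>t\<in>T. c t \<noteq> 0) \<and> (\<forall>i\<in>I. (\<Sum>t\<in>T. c t * w t i) = 0)"
proof -
  define sm :: "'a \<Rightarrow> ('i \<Rightarrow> 'a) \<Rightarrow> ('i \<Rightarrow> 'a)" where "sm = (\<lambda>c u i. c * u i)"
  interpret subfield_module "UNIV :: 'a set" sm
    by unfold_locales (simp_all add: sm_def subfield_UNIV fun_eq_iff algebra_simps)
  define w' where "w' j = (\<lambda>i. if i \<in> I then w j i else 0)" for j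
  define e :: "'i \<Rightarrow> 'i \<Rightarrow> 'a" where "e i' = (\<lambda>i. if i = i' then 1 else 0)" for i'
  have sum_apply: "(\<Sum>t\<in>T. g t) i = (\<Sum>t\<in>T. g t i)" for T and g :: "'b \<Rightarrow> 'i \<Rightarrow> 'a" and i
    by (induction T rule: infinite_finite_induct) auto
  have "w' j = (\<Sum>i'\<in>I. sm (w j i') (e i'))" for j
    using fI by (auto simp: fun_eq_iff sum_apply sm_def e_def w'_def if_distrib sum.delta cong: if_cong)
  then have "\<forall>j\<in>J. w' j \<in> fam_span UNIV sm I e" using fI by (subst span_finite_iff) auto
  then have "\<not> fam_indep UNIV sm J w'" using indep_card_le[of J w' I e] fI lt by auto
  then obtain T c where T: "finite T" "T \<subseteq> J" "(\<Sum>t\<in>T. sm (c t) (w' t)) = 0" "\<exists>t\<in>T. c t \<noteq> 0"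
    unfolding fam_indep_def by blast
  have "(\<Sum>t\<in>T. c t * w t i) = 0" if "i \<in> I" for i
    using fun_cong[OF T(3), of i] that by (simp add: sum_apply sm_def w'_def)
  then show ?thesis using T by blast
qed

locale galois_tower = ramified_tower v k k0 \<pi> \<pi>0 n e0 for v :: "'K::field \<Rightarrow> int" and k k0 \<pi> \<pi>0 n e0 +
  fixes G :: "('K \<Rightarrow> 'K) set" and r :: "'K \<Rightarrow> 'r::field" and c\<pi> :: 'K and d :: int
  assumes compl_k0: "v_complete v k0"
    and G_def: "G = galois_group k" and galois: "card G = n"
    and res: "is_residue_map v r"
    and d_def: "d = diff_val v G k - int n + 1"
    and c\<pi>_def: "c\<pi> = trace G (\<pi> powi (- d))"
begin

lemma G_fin: "finite G" using galois n_pos by (metis card.infinite less_irrefl)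

lemma G_memD: "\<sigma> \<in> G \<Longrightarrow> bij \<sigma> \<and> (\<forall>x y. \<sigma> (x + y) = \<sigma> x + \<sigma> y \<and> \<sigma> (x * y) = \<sigma> x * \<sigma> y) \<and> (\<forall>x\<in>k. \<sigma> x = x)"
  using G_def by (simp add: galois_group_def)

lemma G_add: "\<sigma> \<in> G \<Longrightarrow> \<sigma> (x + y) = \<sigma> x + \<sigma> y" using G_memD by blast

lemma G_mult: "\<sigma> \<in> G \<Longrightarrow> \<sigma> (x * y) = \<sigma> x * \<sigma> y" using G_memD by blast

lemma G_fix: "\<sigma> \<in> G \<Longrightarrow> x \<in> k \<Longrightarrow> \<sigma> x = x" using G_memD by blast

lemma G_inj: "\<sigma> \<in> G \<Longrightarrow> inj \<sigma>" using G_memD bij_is_inj by blast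

lemma G_one: "\<sigma> \<in> G \<Longrightarrow> \<sigma> 1 = 1" using G_fix sub_k subfield_one by blast

lemma G_zero: "\<sigma> \<in> G \<Longrightarrow> \<sigma> 0 = 0"
proof -
  assume s: "\<sigma> \<in> G"
  have "\<sigma> 0 = \<sigma> 0 + \<sigma> 0" using G_add[OF s, of 0 0] by simp
  then show ?thesis by (metis add_cancel_right_right)
qed

lemma G_uminus: "\<sigma> \<in> G \<Longrightarrow> \<sigma> (- x) = - \<sigma> x"
proof -
  assume s: "\<sigma> \<in> G"
  have "\<sigma> x + \<sigma> (- x) = 0" using G_add[OF s, of x "-x"] G_zero[OF s] by simp
  then show ?thesis by (metis neg_eq_iff_add_eq_0)
qed

lemma G_sum: "\<sigma> \<in> G \<Longrightarrow> \<sigma> (sum g I) = (\<Sum>i\<in>I. \<sigma> (g i))"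
  by (induction I rule: infinite_finite_induct) (auto simp: G_zero G_add)

lemma G_power: "\<sigma> \<in> G \<Longrightarrow> \<sigma> (x ^ m) = \<sigma> x ^ m"
  by (induction m) (auto simp: G_one G_mult)

lemma G_nz: "\<sigma> \<in> G \<Longrightarrow> x \<noteq> 0 \<Longrightarrow> \<sigma> x \<noteq> 0"
  using G_inj G_zero by (metis injD)

lemma G_inverse: "\<sigma> \<in> G \<Longrightarrow> \<sigma> (inverse x) = inverse (\<sigma> x)"
proof (cases "x = 0")
  case False
  assume s: "\<sigma> \<in> G"
  have "\<sigma> x * \<sigma> (inverse x) = 1" using G_mult[OF s, of x "inverse x"] False G_one[OF s] by simp
  then show ?thesis by (metis inverse_unique)
qed (simp add: G_zero)

lemma G_comp: "\<sigma> \<in> G \<Longrightarrow> \<tau> \<in> G \<Longrightarrow> \<tau> \<circ> \<sigma> \<in> G"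
proof -
  assume s: "\<sigma> \<in> G" and t: "\<tau> \<in> G"
  have b: "bij (\<tau> \<circ> \<sigma>)" using G_memD[OF s] G_memD[OF t] bij_comp by blast
  have "\<tau> \<circ> \<sigma> \<in> galois_group k" unfolding galois_group_def
    using b s t by (simp add: G_add G_mult G_fix)
  then show ?thesis using G_def by simp
qed

lemma G_reindex: "\<tau> \<in> G \<Longrightarrow> (\<Sum>\<sigma>\<in>G. g (\<tau> \<circ> \<sigma>)) = (\<Sum>\<sigma>\<in>G. g \<sigma>)"
proof -
  assume t: "\<tau> \<in> G"
  have inj: "inj_on ((\<circ>) \<tau>) G"
  proof (rule inj_onI)
    fix \<sigma>1 \<sigma>2 assume e: "\<tau> \<circ> \<sigma>1 = \<tau> \<circ> \<sigma>2"
    show "\<sigma>1 = \<sigma>2"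
    proof
      fix x
      have "\<tau> (\<sigma>1 x) = \<tau> (\<sigma>2 x)" using fun_cong[OF e, of x] by simp
      then show "\<sigma>1 x = \<sigma>2 x" using G_inj[OF t] by (simp add: inj_eq)
    qed
  qed
  have sub: "(\<circ>) \<tau> ` G \<subseteq> G" using G_comp t by blast
  have "card ((\<circ>) \<tau> ` G) = card G" using card_image[OF inj] .
  then have eq: "(\<circ>) \<tau> ` G = G" using card_subset_eq[OF G_fin sub] by simp
  show ?thesis using sum.reindex[OF inj, of g] eq by simp
qed

lemma G_dedekind:
  assumes T: "T \<subseteq> G" and h: "\<forall>x. (\<Sum>\<sigma>\<in>T. c \<sigma> * \<sigma> x) = 0"
  shows "\<forall>\<sigma>\<in>T. c \<sigma> = 0"
proof -
  have fT: "finite T" using T G_fin finite_subset by blast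
  have m: "\<forall>\<sigma>\<in>T. \<forall>x y. \<sigma> (x * y) = \<sigma> x * \<sigma> y" using T G_mult by blast
  have o: "\<forall>\<sigma>\<in>T. \<sigma> 1 = 1" using T G_one by blast
  show ?thesis by (rule dedekind_independence[OF fT m o h])
qed

definition Fix :: "'K set" where "Fix = {z. \<forall>\<sigma>\<in>G. \<sigma> z = z}"

lemma subfield_Fix: "is_subfield Fix"
  unfolding is_subfield_def Fix_def by (auto simp: G_zero G_one G_add G_mult G_uminus G_inverse)

lemma k_sub_Fix: "k \<subseteq> Fix"
  unfolding Fix_def using G_fix by blast

lemma artin_bound:
  assumes fI: "finite I" and sp: "\<forall>z. \<exists>a. (\<forall>i\<in>I. a i \<in> Fix) \<and> z = (\<Sum>i\<in>I. a i * x i)"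
  shows "card G \<le> card I"
proof (rule ccontr)
  assume "\<not> card G \<le> card I"
  then obtain T c where T: "finite T" "T \<subseteq> G" "\<exists>t\<in>T. c t \<noteq> 0"
    and rel: "\<forall>i\<in>I. (\<Sum>\<sigma>\<in>T. c \<sigma> * \<sigma> (x i)) = 0"
    using nontrivial_solution_exists[OF fI, of G "\<lambda>\<sigma> i. \<sigma> (x i)"] by (metis not_le)
  have "(\<Sum>\<sigma>\<in>T. c \<sigma> * \<sigma> z) = 0" for z
  proof -
    obtain a where a: "\<forall>i\<in>I. a i \<in> Fix" "z = (\<Sum>i\<in>I. a i * x i)" using sp by blast
    have hz: "\<sigma> z = (\<Sum>i\<in>I. a i * \<sigma> (x i))" if "\<sigma> \<in> T" for \<sigma>
    proof -
      have "\<sigma> z = (\<Sum>i\<in>I. \<sigma> (a i) * \<sigma> (x i))" using a that T(2) by (auto simp: G_sum G_mult)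
      also have "\<dots> = (\<Sum>i\<in>I. a i * \<sigma> (x i))"
        using a that T(2) by (auto simp: Fix_def intro!: sum.cong)
      finally show ?thesis .
    qed
    have "(\<Sum>\<sigma>\<in>T. c \<sigma> * \<sigma> z) = (\<Sum>\<sigma>\<in>T. \<Sum>i\<in>I. a i * (c \<sigma> * \<sigma> (x i)))"
    proof (rule sum.cong)
      fix \<sigma> assume "\<sigma> \<in> T"
      then show "c \<sigma> * \<sigma> z = (\<Sum>i\<in>I. a i * (c \<sigma> * \<sigma> (x i)))"
        unfolding hz[OF \<open>\<sigma> \<in> T\<close>] by (simp add: sum_distrib_left algebra_simps)
    qed simp
    also have "\<dots> = (\<Sum>i\<in>I. a i * (\<Sum>\<sigma>\<in>T. c \<sigma> * \<sigma> (x i)))"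
      by (subst sum.swap) (simp add: sum_distrib_left)
    finally show ?thesis using rel by simp
  qed
  then show False using G_dedekind[OF T(2)] T(3) by blast
qed

text \<open>If a fixed element had a nonzero coefficient at some \<open>\<pi> ^ j\<close>, \<open>j \<ge> 1\<close>, then \<open>\<pi> ^ j\<close>
  would be a \<open>Fix\<close>-combination of the other \<open>n - 1\<close> powers, contradicting Artin's bound.\<close>

lemma Fix_span_without_power:
  assumes z: "z \<in> Fix" and a: "\<forall>i<n. a i \<in> k" "z = (\<Sum>i<n. a i * \<pi> ^ i)"
    and j: "1 \<le> j" "j < n" "a j \<noteq> 0"
  shows "\<forall>y. \<exists>b. (\<forall>i\<in>{..<n} - {j}. b i \<in> Fix) \<and> y = (\<Sum>i\<in>{..<n} - {j}. b i * \<pi> ^ i)"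
proof
  fix y
  define I where "I = {..<n} - {j}"
  define c where "c i = (if i = 0 then (z - a 0) / a j else - a i / a j)" for i
  have kF: "x \<in> k \<Longrightarrow> x \<in> Fix" for x using k_sub_Fix by blast
  have cF: "c i \<in> Fix" if "i \<in> I" for i
    unfolding c_def using z kF a(1) j subfield_Fix n_pos that unfolding I_def
    by (auto intro!: subfield_divide subfield_diff subfield_uminus)
  define J where "J = {..<n} - {0, j}"
  have IJ: "I = insert 0 J" "0 \<notin> J" "finite J" using j n_pos unfolding I_def J_def by auto
  have "z = a j * \<pi> ^ j + (a 0 + (\<Sum>i\<in>J. a i * \<pi> ^ i))"
  proof -
    have "{..<n} = insert j (insert 0 J)" "j \<notin> insert 0 J" using j n_pos unfolding J_def by auto
    then show ?thesis using a(2) IJ by simp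
  qed
  then have e1: "\<pi> ^ j = (z - a 0 - (\<Sum>i\<in>J. a i * \<pi> ^ i)) / a j"
    using j by (simp add: field_simps)
  have "(\<Sum>i\<in>J. c i * \<pi> ^ i) = (\<Sum>i\<in>J. - (a i * \<pi> ^ i) / a j)"
    using IJ by (intro sum.cong) (auto simp: c_def)
  also have "\<dots> = - (\<Sum>i\<in>J. a i * \<pi> ^ i) / a j"
    by (simp add: sum_divide_distrib[symmetric] sum_negf)
  finally have "(\<Sum>i\<in>J. c i * \<pi> ^ i) = - (\<Sum>i\<in>J. a i * \<pi> ^ i) / a j" .
  then have pj: "\<pi> ^ j = (\<Sum>i\<in>I. c i * \<pi> ^ i)"
    using IJ e1 by (simp add: c_def diff_divide_distrib)
  obtain b where b: "\<forall>i<n. b i \<in> k" "y = (\<Sum>i<n. b i * \<pi> ^ i)" using pi_expansion_k by blast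
  have "y = b j * \<pi> ^ j + (\<Sum>i\<in>I. b i * \<pi> ^ i)"
    using b(2) j unfolding I_def by (simp add: sum.remove[of "{..<n}" j])
  also have "\<dots> = (\<Sum>i\<in>I. (b i + b j * c i) * \<pi> ^ i)"
    unfolding pj by (simp add: sum_distrib_left algebra_simps sum.distrib)
  finally show "\<exists>b. (\<forall>i\<in>{..<n} - {j}. b i \<in> Fix) \<and> y = (\<Sum>i\<in>{..<n} - {j}. b i * \<pi> ^ i)"
    using b(1) kF cF subfield_Fix j(2) unfolding I_def
    by (intro exI[of _ "\<lambda>i. b i + b j * c i"]) (auto intro!: subfield_add subfield_mult)
qed

lemma Fix_eq_k: "Fix = k"
proof
  show "Fix \<subseteq> k"
  proof
    fix z assume z: "z \<in> Fix"
    obtain a where a: "\<forall>i<n. a i \<in> k" "z = (\<Sum>i<n. a i * \<pi> ^ i)" using pi_expansion_k by blast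
    have "a j = 0" if j: "1 \<le> j" "j < n" for j
    proof (rule ccontr)
      assume "a j \<noteq> 0"
      then have "card G \<le> card ({..<n} - {j})"
        using artin_bound Fix_span_without_power[OF z a j] by blast
      then show False using galois j by simp
    qed
    then have "z = a 0"
      using a(2) n_pos by (simp add: sum.remove[of "{..<n}" 0])
    then show "z \<in> k" using a n_pos by auto
  qed
qed (rule k_sub_Fix)

lemma trace_k: "trace G x \<in> k"
proof -
  have "\<tau> (trace G x) = trace G x" if t: "\<tau> \<in> G" for \<tau>
  proof -
    have "\<tau> (trace G x) = (\<Sum>\<sigma>\<in>G. (\<tau> \<circ> \<sigma>) x)" unfolding trace_def using t by (simp add: G_sum)
    also have "\<dots> = trace G x" unfolding trace_def by (rule G_reindex[OF t, of "\<lambda>\<sigma>. \<sigma> x"])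
    finally show ?thesis .
  qed
  then show ?thesis using Fix_eq_k unfolding Fix_def by blast
qed

lemma trace_mult_k: "a \<in> k \<Longrightarrow> trace G (a * x) = a * trace G x"
  unfolding trace_def by (simp add: G_mult G_fix sum_distrib_left)

lemma trace_add: "trace G (x + y) = trace G x + trace G y"
  unfolding trace_def by (simp add: G_add sum.distrib)

lemma trace_nonzero: "\<exists>z. trace G z \<noteq> 0"
proof (rule ccontr)
  assume "\<not> (\<exists>z. trace G z \<noteq> 0)"
  then have "\<forall>z. (\<Sum>\<sigma>\<in>G. 1 * \<sigma> z) = 0" unfolding trace_def by simp
  then have "\<forall>\<sigma>\<in>G. (1::'K) = 0" using G_dedekind[of G "\<lambda>_. 1"] by blast
  moreover have "G \<noteq> {}" using galois n_pos by auto
  ultimately show False by auto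
qed

section \<open>The group algebra and the filtration \<open>C\<^sub>i\<close>\<close>

lemma act_add_x: "act G f (x + y) = act G f x + act G f y"
  unfolding act_def by (simp add: G_add distrib_left sum.distrib)

lemma act_mult_k: "a \<in> k \<Longrightarrow> act G f (a * x) = a * act G f x"
  unfolding act_def by (simp add: G_mult G_fix sum_distrib_left algebra_simps)

lemma act_zero_x: "act G f 0 = 0"
  unfolding act_def by (simp add: G_zero)

lemma act_add_f: "act G (\<lambda>\<sigma>. f \<sigma> + g \<sigma>) x = act G f x + act G g x"
  unfolding act_def by (simp add: distrib_right sum.distrib)

lemma act_diff_f: "act G (\<lambda>\<sigma>. f \<sigma> - g \<sigma>) x = act G f x - act G g x"
  unfolding act_def by (simp add: left_diff_distrib sum_subtractf)

lemma act_scale_f: "act G (\<lambda>\<sigma>. c * f \<sigma>) x = c * act G f x"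
  unfolding act_def by (simp add: sum_distrib_left mult.assoc)

lemma act_zero_f: "act G (\<lambda>\<sigma>. 0) x = 0"
  unfolding act_def by simp

lemma Cset_iff: "f \<in> Cset v G i \<longleftrightarrow> inKG G f \<and> (\<forall>x. x \<noteq> 0 \<longrightarrow> val_ge v (act G f x) (v x + i))"
  unfolding Cset_def val_ge_def by auto

lemma CsetI: "inKG G f \<Longrightarrow> (\<And>x. x \<noteq> 0 \<Longrightarrow> val_ge v (act G f x) (v x + i)) \<Longrightarrow> f \<in> Cset v G i"
  using Cset_iff by blast

lemma CsetD: "f \<in> Cset v G i \<Longrightarrow> x \<noteq> 0 \<Longrightarrow> val_ge v (act G f x) (v x + i)"
  using Cset_iff by blast

lemma Cset_inKG: "f \<in> Cset v G i \<Longrightarrow> inKG G f"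
  using Cset_iff by blast

lemma Cset_mono: "f \<in> Cset v G i \<Longrightarrow> j \<le> i \<Longrightarrow> f \<in> Cset v G j"
  unfolding Cset_iff using val_ge_mono by (meson add_left_mono)

lemma inKG_add: "inKG G f \<Longrightarrow> inKG G g \<Longrightarrow> inKG G (\<lambda>\<sigma>. f \<sigma> + g \<sigma>)"
  unfolding inKG_def by simp

lemma inKG_diff: "inKG G f \<Longrightarrow> inKG G g \<Longrightarrow> inKG G (\<lambda>\<sigma>. f \<sigma> - g \<sigma>)"
  unfolding inKG_def by simp

lemma inKG_scale: "inKG G f \<Longrightarrow> inKG G (\<lambda>\<sigma>. c * f \<sigma>)"
  unfolding inKG_def by simp

lemma inKG_lin: "(\<And>b. b \<in> B \<Longrightarrow> inKG G b) \<Longrightarrow> inKG G (\<lambda>\<sigma>. \<Sum>b\<in>B. c b * b \<sigma>)"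
  unfolding inKG_def by (auto intro!: sum.neutral)

lemma inKG_zero: "inKG G (\<lambda>\<sigma>. 0)"
  unfolding inKG_def by simp

lemma Cset_add: "f \<in> Cset v G i \<Longrightarrow> g \<in> Cset v G i \<Longrightarrow> (\<lambda>\<sigma>. f \<sigma> + g \<sigma>) \<in> Cset v G i"
  by (intro CsetI) (auto simp: act_add_f inKG_add Cset_inKG CsetD intro!: val_ge_add)

lemma Cset_diff: "f \<in> Cset v G i \<Longrightarrow> g \<in> Cset v G i \<Longrightarrow> (\<lambda>\<sigma>. f \<sigma> - g \<sigma>) \<in> Cset v G i"
  by (intro CsetI) (auto simp: act_diff_f inKG_diff Cset_inKG CsetD intro!: val_ge_diff)

lemma Cset_zero: "(\<lambda>\<sigma>. 0) \<in> Cset v G i"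
  by (intro CsetI) (simp_all add: act_zero_f inKG_zero)

lemma Cset_scale: "c \<in> k \<Longrightarrow> c \<noteq> 0 \<Longrightarrow> f \<in> Cset v G i \<Longrightarrow> (\<lambda>\<sigma>. c * f \<sigma>) \<in> Cset v G (i + v c)"
proof (intro CsetI)
  fix x :: 'K assume c: "c \<in> k" "c \<noteq> 0" and f: "f \<in> Cset v G i" and x: "x \<noteq> 0"
  have "val_ge v (act G f x) (v x + i)" using CsetD[OF f x] .
  then have "val_ge v (c * act G f x) (v c + (v x + i))" using val_ge_mult val_ge_self by blast
  then show "val_ge v (act G (\<lambda>\<sigma>. c * f \<sigma>) x) (v x + (i + v c))"
    by (simp add: act_scale_f algebra_simps)
qed (use Cset_inKG inKG_scale in blast)

lemma Cset_scale0: "c \<in> k \<Longrightarrow> f \<in> Cset v G i \<Longrightarrow> val_ge v c j \<Longrightarrow> (\<lambda>\<sigma>. c * f \<sigma>) \<in> Cset v G (i + j)"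
proof (cases "c = 0")
  case True
  then show ?thesis using Cset_zero by simp
next
  case False
  assume "c \<in> k" "f \<in> Cset v G i" "val_ge v c j"
  then have "(\<lambda>\<sigma>. c * f \<sigma>) \<in> Cset v G (i + v c)" using Cset_scale False by blast
  moreover have "j \<le> v c" using \<open>val_ge v c j\<close> False by (simp add: val_ge_def)
  ultimately show ?thesis using Cset_mono by (metis add_left_mono)
qed

lemma Cset_sum: "(\<And>b. b \<in> B \<Longrightarrow> g b \<in> Cset v G i) \<Longrightarrow> (\<lambda>\<sigma>. \<Sum>b\<in>B. g b \<sigma>) \<in> Cset v G i"
proof (induction B rule: infinite_finite_induct)
  case (infinite A)
  then show ?case using Cset_zero by simp
next
  case empty
  then show ?case using Cset_zero by simp
next
  case (insert b B)
  then have "(\<lambda>\<sigma>. g b \<sigma> + (\<Sum>b\<in>B. g b \<sigma>)) \<in> Cset v G i"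
    by (intro Cset_add) auto
  then show ?case using insert.hyps by simp
qed

text \<open>The hypotheses do not make \<open>v\<close> invariant under \<open>G\<close>; it suffices that an
  automorphism lowers valuations by at most a fixed amount.\<close>

definition shift_bound :: int where "shift_bound = int n * (\<Sum>\<sigma>\<in>G. \<bar>v (\<sigma> \<pi>) - 1\<bar>)"

lemma val_ge_aut: "\<sigma> \<in> G \<Longrightarrow> val_ge v x N \<Longrightarrow> val_ge v (\<sigma> x) (N - shift_bound)"
proof -
  assume s: "\<sigma> \<in> G" and x: "val_ge v x N"
  obtain a where a: "\<forall>i<n. a i \<in> k" "x = (\<Sum>i<n. a i * \<pi> ^ i)" using pi_expansion_k by blast
  have each: "\<forall>i<n. val_ge v (a i * \<pi> ^ i) N"
    using val_ge_pi_expansion_iff[OF a(1), of N] x a(2) by simp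
  have sp: "\<sigma> \<pi> \<noteq> 0" using G_nz[OF s unif(1)] .
  have le: "\<bar>v (\<sigma> \<pi>) - 1\<bar> \<le> (\<Sum>\<tau>\<in>G. \<bar>v (\<tau> \<pi>) - 1\<bar>)"
    using s G_fin by (intro member_le_sum) auto
  have "\<sigma> x = (\<Sum>i<n. a i * \<sigma> \<pi> ^ i)" using a s by (simp add: G_sum G_mult G_fix G_power)
  moreover have "val_ge v (a i * \<sigma> \<pi> ^ i) (N - shift_bound)" if i: "i < n" for i
  proof (cases "a i = 0")
    case False
    have "v (a i * \<pi> ^ i) \<ge> N" using each[rule_format, OF i] False unif by (simp add: val_ge_def)
    then have "v (a i) + int i \<ge> N" using False unif by (simp add: v_mult v_power)
    moreover have "v (a i * \<sigma> \<pi> ^ i) = v (a i) + int i * v (\<sigma> \<pi>)"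
      using False sp by (simp add: v_mult v_power)
    moreover have "int i * (v (\<sigma> \<pi>) - 1) \<ge> - shift_bound"
    proof -
      have "\<bar>int i * (v (\<sigma> \<pi>) - 1)\<bar> = int i * \<bar>v (\<sigma> \<pi>) - 1\<bar>" by (simp add: abs_mult)
      also have "\<dots> \<le> int n * (\<Sum>\<tau>\<in>G. \<bar>v (\<tau> \<pi>) - 1\<bar>)"
        using i le by (intro mult_mono) auto
      finally show ?thesis unfolding shift_bound_def by linarith
    qed
    ultimately show ?thesis using False sp by (simp add: val_ge_def algebra_simps)
  qed simp
  ultimately show ?thesis by (auto intro!: val_ge_sum)
qed

lemma Cset_exists: "inKG G f \<Longrightarrow> \<exists>i. f \<in> Cset v G i"
proof -
  assume f: "inKG G f"
  define M where "M = - (\<Sum>\<sigma>\<in>G. \<bar>v (f \<sigma>)\<bar>)"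
  have fM: "val_ge v (f \<sigma>) M" if "\<sigma> \<in> G" for \<sigma>
  proof -
    have "\<bar>v (f \<sigma>)\<bar> \<le> (\<Sum>\<sigma>\<in>G. \<bar>v (f \<sigma>)\<bar>)" using that G_fin by (intro member_le_sum) auto
    then show ?thesis unfolding M_def val_ge_def by linarith
  qed
  have "f \<in> Cset v G (M - shift_bound)"
  proof (rule CsetI[OF f])
    fix x :: 'K assume "x \<noteq> 0"
    have "val_ge v (f \<sigma> * \<sigma> x) (v x + (M - shift_bound))" if "\<sigma> \<in> G" for \<sigma>
    proof -
      have "val_ge v (\<sigma> x) (v x - shift_bound)" using val_ge_aut[OF that val_ge_self] .
      then have "val_ge v (f \<sigma> * \<sigma> x) (M + (v x - shift_bound))" using val_ge_mult fM[OF that] by blast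
      then show ?thesis by (simp add: algebra_simps)
    qed
    then show "val_ge v (act G f x) (v x + (M - shift_bound))" unfolding act_def by (auto intro!: val_ge_sum)
  qed
  then show ?thesis by blast
qed

lemma inKG_zero_iff: "inKG G f \<Longrightarrow> (\<forall>\<sigma>\<in>G. f \<sigma> = 0) \<Longrightarrow> f = (\<lambda>\<sigma>. 0)"
  unfolding inKG_def by auto

lemma Cset_notall: "inKG G f \<Longrightarrow> f \<noteq> (\<lambda>\<sigma>. 0) \<Longrightarrow> \<exists>i. f \<notin> Cset v G i"
proof -
  assume f: "inKG G f" "f \<noteq> (\<lambda>\<sigma>. 0)"
  have "\<exists>x. act G f x \<noteq> 0"
  proof (rule ccontr)
    assume "\<not> (\<exists>x. act G f x \<noteq> 0)"
    then have "\<forall>x. (\<Sum>\<sigma>\<in>G. f \<sigma> * \<sigma> x) = 0" unfolding act_def by simp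
    then have "\<forall>\<sigma>\<in>G. f \<sigma> = 0" using G_dedekind[of G f] by blast
    then show False using inKG_zero_iff[OF f(1)] f(2) by blast
  qed
  then obtain x where x: "act G f x \<noteq> 0" by blast
  then have x0: "x \<noteq> 0" using act_zero_x by auto
  have "f \<notin> Cset v G (v (act G f x) - v x + 1)"
  proof
    assume "f \<in> Cset v G (v (act G f x) - v x + 1)"
    then have "val_ge v (act G f x) (v x + (v (act G f x) - v x + 1))" using CsetD x0 by blast
    then show False using x by (simp add: val_ge_def)
  qed
  then show ?thesis by blast
qed

lemma dval_exists:
  assumes f: "inKG G f" "f \<noteq> (\<lambda>\<sigma>. 0)"
  shows "\<exists>i. f \<in> Cset v G i \<and> f \<notin> Cset v G (i + 1)"
proof -
  obtain i1 where i1: "f \<in> Cset v G i1" using Cset_exists[OF f(1)] by blast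
  obtain i0 where i0: "f \<notin> Cset v G i0" using Cset_notall[OF f] by blast
  have lt: "i1 < i0" using i1 i0 Cset_mono by (meson not_le_imp_less)
  define S where "S = {i. i1 \<le> i \<and> i \<le> i0 \<and> f \<in> Cset v G i}"
  have fS: "finite S" unfolding S_def by (rule finite_subset[of _ "{i1..i0}"]) auto
  have i1S: "i1 \<in> S" unfolding S_def using i1 lt by simp
  define m where "m = Max S"
  have mS: "m \<in> S" unfolding m_def using fS i1S by (intro Max_in) auto
  have "f \<notin> Cset v G (m + 1)"
  proof
    assume h: "f \<in> Cset v G (m + 1)"
    have "m + 1 \<le> i0"
    proof (rule ccontr)
      assume "\<not> m + 1 \<le> i0"
      then have "f \<in> Cset v G i0" using Cset_mono[OF h] by simp
      then show False using i0 by simp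
    qed
    then have "m + 1 \<in> S" using h mS unfolding S_def by simp
    then have "m + 1 \<le> m" unfolding m_def using fS by (intro Max_ge) auto
    then show False by simp
  qed
  then show ?thesis using mS unfolding S_def by blast
qed

lemma dval_char:
  assumes f: "inKG G f" "f \<noteq> (\<lambda>\<sigma>. 0)"
  shows "f \<in> Cset v G (dval v G d f + d) \<and> f \<notin> Cset v G (dval v G d f + d + 1)"
proof -
  obtain i where i: "f \<in> Cset v G i" "f \<notin> Cset v G (i + 1)" using dval_exists[OF f] by blast
  have "dval v G d f = i - d"
    unfolding dval_def
  proof (rule the_equality)
    show "f \<in> Cset v G (i - d + d) \<and> f \<notin> Cset v G (i - d + d + 1)" using i by simp
  next
    fix j assume j: "f \<in> Cset v G (j + d) \<and> f \<notin> Cset v G (j + d + 1)"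
    have "j + d \<le> i"
    proof (rule ccontr)
      assume "\<not> j + d \<le> i"
      then have "f \<in> Cset v G (i + 1)" using j Cset_mono[of f "j + d" "i + 1"] by simp
      then show False using i by simp
    qed
    moreover have "i \<le> j + d"
    proof (rule ccontr)
      assume "\<not> i \<le> j + d"
      then have "f \<in> Cset v G (j + d + 1)" using i Cset_mono[of f i "j + d + 1"] by simp
      then show False using j by simp
    qed
    ultimately show "j = i - d" by simp
  qed
  then show ?thesis using i by simp
qed

lemma Cset_dval_iff:
  assumes f: "inKG G f" "f \<noteq> (\<lambda>\<sigma>. 0)"
  shows "f \<in> Cset v G j \<longleftrightarrow> j \<le> dval v G d f + d"
proof
  assume "f \<in> Cset v G j"
  then show "j \<le> dval v G d f + d"
    using dval_char[OF f] Cset_mono[of f j "dval v G d f + d + 1"] by (meson not_le_imp_less zless_imp_add1_zle)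
next
  assume "j \<le> dval v G d f + d"
  then show "f \<in> Cset v G j" using dval_char[OF f] Cset_mono by blast
qed

lemma dval_eqI:
  assumes "inKG G f" "f \<in> Cset v G (i + d)" "f \<notin> Cset v G (i + d + 1)"
  shows "dval v G d f = i"
proof -
  have f0: "f \<noteq> (\<lambda>\<sigma>. 0)" using assms(3) Cset_zero by auto
  show ?thesis using Cset_dval_iff[OF assms(1) f0, of "i + d"] Cset_dval_iff[OF assms(1) f0, of "i + d + 1"]
    assms by simp
qed

lemma val_ring_iff: "x \<in> val_ring v \<longleftrightarrow> val_ge v x 0"
  unfolding val_ring_def val_ge_def by simp

lemma r_add: "val_ge v x 0 \<Longrightarrow> val_ge v y 0 \<Longrightarrow> r (x + y) = r x + r y"
  using res unfolding is_residue_map_def val_ring_iff[symmetric] by blast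

lemma r_mult: "val_ge v x 0 \<Longrightarrow> val_ge v y 0 \<Longrightarrow> r (x * y) = r x * r y"
  using res unfolding is_residue_map_def val_ring_iff[symmetric] by blast

lemma r_surj: "\<exists>x. val_ge v x 0 \<and> r x = z"
proof -
  obtain x where "x \<in> val_ring v" "r x = z" using res unfolding is_residue_map_def by blast
  then show ?thesis using val_ring_iff by blast
qed

lemma r_zero_iff: "val_ge v x 0 \<Longrightarrow> r x = 0 \<longleftrightarrow> val_ge v x 1"
proof -
  assume "val_ge v x 0"
  then have x: "x \<in> val_ring v" using val_ring_iff by blast
  have "\<forall>x\<in>val_ring v. r x = 0 \<longleftrightarrow> (x = 0 \<or> v x \<ge> 1)" using res unfolding is_residue_map_def by blast
  then show ?thesis using x unfolding val_ge_def by blast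
qed

lemma r_zero: "r 0 = 0" using r_zero_iff[of 0] by simp

lemma r_uminus: "val_ge v x 0 \<Longrightarrow> r (- x) = - r x"
proof -
  assume x: "val_ge v x 0"
  have "r x + r (- x) = 0" using r_add[OF x, of "-x"] x r_zero by simp
  then show ?thesis by (metis neg_eq_iff_add_eq_0)
qed

lemma r_diff: "val_ge v x 0 \<Longrightarrow> val_ge v y 0 \<Longrightarrow> r (x - y) = r x - r y"
  using r_add[of x "-y"] r_uminus[of y] by simp

lemma r_sum: "(\<And>i. i \<in> I \<Longrightarrow> val_ge v (g i) 0) \<Longrightarrow> r (sum g I) = (\<Sum>i\<in>I. r (g i))"
proof (induction I rule: infinite_finite_induct)
  case (insert i I)
  then show ?case using r_add[of "g i" "sum g I"] by (simp add: val_ge_sum)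
qed (simp_all add: r_zero)

lemma r_unit: "x \<noteq> 0 \<Longrightarrow> v x = 0 \<Longrightarrow> r x \<noteq> 0"
  using r_zero_iff[of x] by (simp add: val_ge_def)

lemma residue_lift_k0: "val_ge v x 0 \<Longrightarrow> \<exists>a\<in>k0. val_ge v a 0 \<and> r a = r x \<and> val_ge v (x - a) 1"
proof -
  assume x: "val_ge v x 0"
  obtain a where a: "a \<in> k0" "val_ge v a 0" "val_ge v (x - a) 1" using approx_by_k0[OF x] by blast
  have "r (x - a) = 0" using r_zero_iff[of "x - a"] a x val_ge_diff by blast
  then have "r x = r a" using r_diff[OF x a(2)] by simp
  then show ?thesis using a by auto
qed

section \<open>The different and the unit \<open>c\<^sub>\<pi>\<close>\<close>

lemma trace_bound: "val_ge v x N \<Longrightarrow> val_ge v (trace G x) (N - shift_bound)"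
  unfolding trace_def using val_ge_aut by (auto intro!: val_ge_sum)

lemma trace_zero: "trace G 0 = 0" unfolding trace_def by (simp add: G_zero)

lemma trace_sum: "trace G (sum g I) = (\<Sum>i\<in>I. trace G (g i))"
proof (induction I rule: infinite_finite_induct)
  case (insert i I)
  then show ?case by (simp add: trace_add)
qed (simp_all add: trace_zero)

lemma codifferent_iff: "x \<in> codifferent v G k \<longleftrightarrow> (\<forall>y. val_ge v y 0 \<longrightarrow> val_ge v (trace G (x * y)) 0)"
proof -
  have "x \<in> codifferent v G k \<longleftrightarrow> (\<forall>y\<in>val_ring v. trace G (x * y) \<in> val_ring v)"
    unfolding codifferent_def using trace_k by blast
  then show ?thesis by (simp add: Ball_def val_ring_iff)
qed

lemma codifferent_trace: "x \<in> codifferent v G k \<Longrightarrow> val_ge v (trace G x) 0"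
proof -
  assume "x \<in> codifferent v G k"
  then have h: "\<forall>y. val_ge v y 0 \<longrightarrow> val_ge v (trace G (x * y)) 0" unfolding codifferent_iff by blast
  have one: "val_ge v 1 0" by (simp add: val_ge_def)
  have "val_ge v (trace G (x * 1)) 0" using h[rule_format, OF one] .
  then show ?thesis by simp
qed

lemma codifferent_of_val_ge_bound: "val_ge v x shift_bound \<Longrightarrow> x \<in> codifferent v G k"
  unfolding codifferent_iff using trace_bound val_ge_mult by (metis add.right_neutral diff_self)

lemma codifferent_up_closed: "x \<in> codifferent v G k \<Longrightarrow> x \<noteq> 0 \<Longrightarrow> val_ge v x' (v x) \<Longrightarrow> x' \<in> codifferent v G k"
proof -
  assume x: "x \<in> codifferent v G k" "x \<noteq> 0" and x': "val_ge v x' (v x)"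
  have q: "val_ge v (x' / x) 0"
  proof (cases "x' = 0")
    case False
    then show ?thesis using x' x(2) by (simp add: val_ge_def v_divide)
  qed simp
  show ?thesis unfolding codifferent_iff
  proof (intro allI impI)
    fix y assume y: "val_ge v y 0"
    have "val_ge v (x' / x * y) 0" using val_ge_mult[OF q y] by simp
    then have "val_ge v (trace G (x * (x' / x * y))) 0" using x(1) unfolding codifferent_iff by blast
    then show "val_ge v (trace G (x' * y)) 0" using x(2) by (simp add: field_simps)
  qed
qed

lemma codifferent_bounded_below: "\<exists>M. \<forall>x\<in>codifferent v G k. val_ge v x M"
proof -
  obtain z0 where z0: "trace G z0 \<noteq> 0" using trace_nonzero by blast
  define t0 where "t0 = trace G z0"
  have z00: "z0 \<noteq> 0" using z0 unfolding trace_def by (auto simp: G_zero)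
  have t0k: "t0 \<in> k" unfolding t0_def by (rule trace_k)
  obtain \<rho> where \<rho>: "\<rho> \<in> k" "\<rho> \<noteq> 0" "v \<rho> = int n" using k_element_of_val_n by blast
  define \<mu> where "\<mu> = inverse \<rho> / t0"
  have \<mu>k: "\<mu> \<in> k" unfolding \<mu>_def using \<rho> t0k sub_k by (intro subfield_divide subfield_inverse) auto
  have \<mu>0: "\<mu> \<noteq> 0" unfolding \<mu>_def using \<rho> z0 t0_def by simp
  define M where "M = v z0 + v \<mu> + 1"
  have "val_ge v x M" if x: "x \<in> codifferent v G k" for x
  proof (cases "x = 0")
    case False
    show ?thesis
    proof (rule ccontr)
      assume "\<not> val_ge v x M"
      then have vx: "v x < M" using False by (simp add: val_ge_def)
      define y where "y = z0 * \<mu> / x"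
      have "val_ge v y 0" unfolding y_def using vx z00 \<mu>0 False
        by (simp add: val_ge_def v_divide v_mult M_def)
      then have "val_ge v (trace G (x * y)) 0" using x codifferent_iff by blast
      moreover have "x * y = \<mu> * z0" unfolding y_def using False by (simp add: field_simps)
      ultimately have "val_ge v (\<mu> * t0) 0" using trace_mult_k[OF \<mu>k] unfolding t0_def by simp
      moreover have "\<mu> * t0 = inverse \<rho>" unfolding \<mu>_def using z0 t0_def by simp
      ultimately show False using \<rho> n_pos by (simp add: val_ge_def v_inverse)
    qed
  qed simp
  then show ?thesis by blast
qed

lemma codifferent_is_fractional_ideal: "\<exists>\<delta>. \<forall>x. x \<in> codifferent v G k \<longleftrightarrow> (x = 0 \<or> v x \<ge> - \<delta>)"
proof -
  obtain M where M: "\<forall>x\<in>codifferent v G k. val_ge v x M" using codifferent_bounded_below by blast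
  obtain x1 where x1: "x1 \<noteq> 0" "v x1 = shift_bound" using v_surj by blast
  have x1c: "x1 \<in> codifferent v G k" using codifferent_of_val_ge_bound x1 by (simp add: val_ge_def)
  define S where "S = {j. M \<le> j \<and> j \<le> shift_bound \<and> (\<exists>x\<in>codifferent v G k. x \<noteq> 0 \<and> v x = j)}"
  have fS: "finite S" unfolding S_def by (rule finite_subset[of _ "{M..shift_bound}"]) auto
  have bound_in_S: "shift_bound \<in> S" unfolding S_def using x1 x1c M by (auto simp: val_ge_def)
  define m where "m = Min S"
  have mS: "m \<in> S" unfolding m_def using fS bound_in_S by (intro Min_in) auto
  then obtain xm where xm: "xm \<in> codifferent v G k" "xm \<noteq> 0" "v xm = m" unfolding S_def by blast
  have "x \<in> codifferent v G k \<longleftrightarrow> (x = 0 \<or> v x \<ge> m)" for x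
  proof
    assume x: "x \<in> codifferent v G k"
    show "x = 0 \<or> v x \<ge> m"
    proof (cases "x = 0")
      case False
      show ?thesis
      proof (cases "v x \<le> shift_bound")
        case True
        then have "v x \<in> S" unfolding S_def using x False M by (auto simp: val_ge_def)
        then show ?thesis unfolding m_def using fS by simp
      next
        case False
        then show ?thesis using mS unfolding S_def by auto
      qed
    qed simp
  next
    assume "x = 0 \<or> v x \<ge> m"
    then have "val_ge v x (v xm)" using xm by (auto simp: val_ge_def)
    then show "x \<in> codifferent v G k" using codifferent_up_closed[OF xm(1,2)] by blast
  qed
  then show ?thesis by (intro exI[of _ "- m"]) simp
qed

definition \<delta> :: int where "\<delta> = diff_val v G k"

lemma codifferent_iff_delta: "x \<in> codifferent v G k \<longleftrightarrow> val_ge v x (- \<delta>)"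
proof -
  obtain \<delta>0 where h: "\<forall>x. x \<in> codifferent v G k \<longleftrightarrow> (x = 0 \<or> v x \<ge> - \<delta>0)" using codifferent_is_fractional_ideal by blast
  have "diff_val v G k = \<delta>0"
    unfolding diff_val_def
  proof (rule the_equality)
    show "\<forall>x. x \<in> codifferent v G k \<longleftrightarrow> (x = 0 \<or> - \<delta>0 \<le> v x)" using h by blast
  next
    fix e assume e: "\<forall>x. x \<in> codifferent v G k \<longleftrightarrow> (x = 0 \<or> - e \<le> v x)"
    obtain x where x: "x \<noteq> 0" "v x = - e" using v_surj by blast
    obtain y where y: "y \<noteq> 0" "v y = - \<delta>0" using v_surj by blast
    have "- \<delta>0 \<le> - e" using e h x by auto
    moreover have "- e \<le> - \<delta>0" using e h y by auto
    ultimately show "e = \<delta>0" by simp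
  qed
  then show ?thesis using h unfolding \<delta>_def val_ge_def by auto
qed

lemma d_eq: "d = \<delta> - int n + 1" using d_def \<delta>_def by simp



lemma trace_pi_powi_minus_delta_minus_one:
  defines "t \<equiv> trace G (\<pi> powi (- \<delta> - 1))"
  shows "t \<noteq> 0 \<and> v t \<le> - int n"
proof -
  have "\<pi> powi (- \<delta> - 1) \<notin> codifferent v G k"
    unfolding codifferent_iff_delta val_ge_def using pi_powi_nz[of "- \<delta> - 1"] v_pi_powi[of "- \<delta> - 1"] by linarith
  then obtain y where y: "val_ge v y 0" "\<not> val_ge v (trace G (\<pi> powi (- \<delta> - 1) * y)) 0"
    unfolding codifferent_iff by blast
  obtain a where a: "\<forall>i<n. a i \<in> k" "y = (\<Sum>i<n. a i * \<pi> ^ i)" using pi_expansion_k by blast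
  have integral: "val_ge v (a i) 0" if "i < n" for i
    using power_expansion_coeff_integral[of n a \<pi>] n_dvd_v_k a y(1) unif that by auto
  have "\<pi> powi (- \<delta> - 1) * y = (\<Sum>i<n. a i * \<pi> powi (int i - \<delta> - 1))"
    unfolding a(2) sum_distrib_left
    using pi_powi_add[of "- \<delta> - 1" "int _"] by (intro sum.cong) (simp_all add: algebra_simps)
  then have "trace G (\<pi> powi (- \<delta> - 1) * y) = (\<Sum>i<n. a i * trace G (\<pi> powi (int i - \<delta> - 1)))"
    using a(1) by (simp add: trace_sum trace_mult_k)
  also have "\<dots> = a 0 * t + (\<Sum>i\<in>{1..<n}. a i * trace G (\<pi> powi (int i - \<delta> - 1)))"
  proof -
    have "{..<n} = insert 0 {1..<n}" using n_pos by auto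
    then show ?thesis unfolding t_def by simp
  qed
  finally have tr: "trace G (\<pi> powi (- \<delta> - 1) * y)
      = a 0 * t + (\<Sum>i\<in>{1..<n}. a i * trace G (\<pi> powi (int i - \<delta> - 1)))" .
  have "val_ge v (a i * trace G (\<pi> powi (int i - \<delta> - 1))) 0" if i: "i \<in> {1..<n}" for i
  proof -
    have "\<pi> powi (int i - \<delta> - 1) \<in> codifferent v G k"
      unfolding codifferent_iff_delta using i by (simp add: val_ge_def v_pi_powi)
    then show ?thesis using val_ge_mult[OF integral codifferent_trace] i by fastforce
  qed
  then have "val_ge v (\<Sum>i\<in>{1..<n}. a i * trace G (\<pi> powi (int i - \<delta> - 1))) 0"
    by (rule val_ge_sum)
  then have "\<not> val_ge v (a 0 * t) 0"
    using y(2) val_ge_add unfolding tr by blast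
  then have t0: "t \<noteq> 0" "v t < 0"
    using integral[of 0] n_pos by (auto simp: val_ge_def v_mult)
  moreover obtain q where q: "v t = int n * q" using n_dvd_v_k trace_k t0 unfolding t_def by blast
  then have "q \<le> -1" using t0 n_pos by (simp add: mult_less_0_iff)
  then have "int n * q \<le> int n * (-1)" using n_pos by (intro mult_left_mono) auto
  ultimately show ?thesis using q by simp
qed

lemma c\<pi>_unit: "c\<pi> \<noteq> 0 \<and> v c\<pi> = 0"
proof -
  define t where "t = trace G (\<pi> powi (- \<delta> - 1))"
  have t: "t \<noteq> 0" "v t \<le> - int n" using trace_pi_powi_minus_delta_minus_one unfolding t_def by auto
  obtain \<rho> where \<rho>: "\<rho> \<in> k" "\<rho> \<noteq> 0" "v \<rho> = int n" using k_element_of_val_n by blast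
  define u where "u = \<pi> ^ n / \<rho>"
  have u: "u \<noteq> 0" "v u = 0" unfolding u_def using \<rho> unif by (auto simp: v_divide v_power)
  obtain b where b: "b \<in> k0" "val_ge v b 0" "val_ge v (u - b) 1"
    using approx_by_k0[of u] u by (auto simp: val_ge_def)
  have b_unit: "b \<noteq> 0" "v b = 0"
  proof -
    show "b \<noteq> 0" using b(3) u by (auto simp: val_ge_def)
    have "\<not> val_ge v b 1"
      using val_ge_add[OF _ b(3), of b] u by (auto simp: val_ge_def)
    then show "v b = 0" using b(2) \<open>b \<noteq> 0\<close> by (simp add: val_ge_def)
  qed
  have "- d = int n + (- \<delta> - 1)" using d_eq by simp
  then have "\<pi> powi (- d) = \<pi> powi (int n) * \<pi> powi (- \<delta> - 1)"
    using pi_powi_add by simp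
  then have "\<pi> powi (- d) = b * \<rho> * \<pi> powi (- \<delta> - 1) + \<rho> * ((u - b) * \<pi> powi (- \<delta> - 1))"
    unfolding u_def using \<rho> by (simp add: algebra_simps)
  then have c\<pi>: "c\<pi> = b * \<rho> * t + \<rho> * trace G ((u - b) * \<pi> powi (- \<delta> - 1))"
    unfolding c\<pi>_def t_def using b(1) k0k \<rho>(1) sub_k
    by (simp add: trace_add trace_mult_k subfield_mult mult.assoc subset_iff)
  have "val_ge v ((u - b) * \<pi> powi (- \<delta> - 1)) (- \<delta>)"
    using val_ge_mult[OF b(3) val_ge_self[of "\<pi> powi (- \<delta> - 1)"]] by (simp add: v_pi_powi)
  then have "val_ge v (trace G ((u - b) * \<pi> powi (- \<delta> - 1))) 0"
    using codifferent_iff_delta codifferent_trace by blast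
  then have "val_ge v (\<rho> * trace G ((u - b) * \<pi> powi (- \<delta> - 1))) (int n)"
    using val_ge_mult[OF val_ge_self[of \<rho>]] \<rho> by fastforce
  moreover have "v (b * \<rho> * t) + 1 \<le> int n" using b_unit \<rho> t n_pos by (simp add: v_mult)
  ultimately have "val_ge v (\<rho> * trace G ((u - b) * \<pi> powi (- \<delta> - 1))) (v (b * \<rho> * t) + 1)"
    using val_ge_mono by blast
  then have "c\<pi> \<noteq> 0 \<and> v c\<pi> = v (b * \<rho> * t)"
    unfolding c\<pi> using v_add_strict b_unit \<rho> t by simp
  moreover have "\<pi> powi (- d) \<in> codifferent v G k"
    unfolding codifferent_iff_delta using d_eq n_pos by (simp add: val_ge_def v_pi_powi)
  then have "val_ge v c\<pi> 0" unfolding c\<pi>_def by (rule codifferent_trace)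
  ultimately show ?thesis using b_unit \<rho> t by (auto simp: val_ge_def v_mult)
qed

lemma r_c\<pi>: "r c\<pi> \<noteq> 0"
  using c\<pi>_unit r_unit by blast


section \<open>The maps \<open>p\<^sub>i\<close>\<close>

abbreviation "dv f \<equiv> dval v G d f"

abbreviation "fp f \<equiv> frakp v G r n \<pi> c\<pi> d f"

abbreviation "pm i f \<equiv> pmap G r n \<pi> c\<pi> i f"

lemma act_sum_f: "act G (\<lambda>\<sigma>. \<Sum>b\<in>S. g b \<sigma>) x = (\<Sum>b\<in>S. act G (g b) x)"
  unfolding act_def by (simp add: sum_distrib_right) (rule sum.swap)

lemma coeff_pmap: "coeff (pm i f) m =
   (if m < n then inverse (r c\<pi>) * r (act G f (\<pi> powi (int m - i)) / \<pi> ^ m) else 0)"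
proof -
  have "coeff (\<Sum>j<n. monom (r (act G f (\<pi> powi (int j - i)) / \<pi> ^ j)) j) m
      = (\<Sum>j<n. if j = m then r (act G f (\<pi> powi (int j - i)) / \<pi> ^ j) else 0)"
    unfolding coeff_sum by (simp add: coeff_monom)
  also have "\<dots> = (if m < n then r (act G f (\<pi> powi (int m - i)) / \<pi> ^ m) else 0)"
    by (simp add: sum.delta)
  finally show ?thesis unfolding pmap_def by simp
qed

lemma pmap_coeff_integral: "f \<in> Cset v G i \<Longrightarrow> val_ge v (act G f (\<pi> powi (int m - i)) / \<pi> ^ m) 0"
proof -
  assume f: "f \<in> Cset v G i"
  have "val_ge v (act G f (\<pi> powi (int m - i))) (v (\<pi> powi (int m - i)) + i)"
    using CsetD[OF f pi_powi_nz] .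
  then have h: "val_ge v (act G f (\<pi> powi (int m - i))) (0 + v (\<pi> ^ m))"
    using unif by (simp add: v_pi_powi v_power)
  show ?thesis by (rule val_ge_divide[OF _ h]) (use unif in simp)
qed

lemma pmap_eq_zero: "f \<in> Cset v G (i + 1) \<Longrightarrow> pm i f = 0"
proof -
  assume f: "f \<in> Cset v G (i + 1)"
  have "r (act G f (\<pi> powi (int m - i)) / \<pi> ^ m) = 0" for m
  proof -
    have "val_ge v (act G f (\<pi> powi (int m - i))) (v (\<pi> powi (int m - i)) + (i + 1))"
      using CsetD[OF f pi_powi_nz] .
    then have h0: "val_ge v (act G f (\<pi> powi (int m - i))) (1 + v (\<pi> ^ m))"
      using unif by (simp add: v_pi_powi v_power add.commute)
    have h: "val_ge v (act G f (\<pi> powi (int m - i)) / \<pi> ^ m) 1" by (rule val_ge_divide[OF _ h0]) (use unif in simp)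
    then show ?thesis using r_zero_iff[of "act G f (\<pi> powi (int m - i)) / \<pi> ^ m"] val_ge_mono[OF h] by simp
  qed
  then show ?thesis by (simp add: poly_eq_iff coeff_pmap)
qed

lemma act_pi_expansion:
  assumes x: "x \<noteq> 0"
  shows "\<exists>a. (\<forall>j<n. a j \<in> k \<and> val_ge v (a j) (v x + i - int j)) \<and>
     act G f x = (\<Sum>j<n. a j * act G f (\<pi> powi (int j - i)))"
proof -
  obtain a where a: "\<forall>j<n. a j \<in> k" "x * \<pi> powi i = (\<Sum>j<n. a j * \<pi> ^ j)" using pi_expansion_k by blast
  have vx: "v (x * \<pi> powi i) = v x + i" using x pi_powi_nz by (simp add: v_mult v_pi_powi)
  have each: "\<forall>j<n. val_ge v (a j * \<pi> ^ j) (v x + i)"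
    using val_ge_pi_expansion_iff[OF a(1), of "v x + i"] a(2) vx val_ge_self[of "x * \<pi> powi i"] by simp
  have aj: "val_ge v (a j) (v x + i - int j)" if "j < n" for j
    using each[rule_format, OF that] val_ge_mult_iff[of "\<pi> ^ j" "a j"] unif by (simp add: v_power)
  have xe: "x = (\<Sum>j<n. a j * \<pi> powi (int j - i))"
  proof -
    have "x = x * \<pi> powi i * \<pi> powi (- i)"
      using pi_powi_add[of i "- i"] by (simp add: mult.assoc)
    also have "\<dots> = (\<Sum>j<n. a j * (\<pi> ^ j * \<pi> powi (- i)))"
      unfolding a(2) by (simp add: sum_distrib_right mult.assoc)
    also have "\<dots> = (\<Sum>j<n. a j * \<pi> powi (int j - i))"
    proof (rule sum.cong)
      fix j
      have "\<pi> powi (int j + - i) = \<pi> powi (int j) * \<pi> powi (- i)" by (rule pi_powi_add)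
      then show "a j * (\<pi> ^ j * \<pi> powi (- i)) = a j * \<pi> powi (int j - i)" by simp
    qed simp
    finally show ?thesis .
  qed
  have "act G f x = (\<Sum>j<n. a j * act G f (\<pi> powi (int j - i)))"
  proof -
    have "act G f (\<Sum>j<n. a j * \<pi> powi (int j - i)) = (\<Sum>j<n. act G f (a j * \<pi> powi (int j - i)))"
      by (induction n) (auto simp: act_add_x act_zero_x)
    then show ?thesis using a(1) xe by (simp add: act_mult_k)
  qed
  then show ?thesis using a(1) aj by blast
qed

text \<open>\<open>p\<^sub>i\<close> detects \<open>C\<^bsub>i+1\<^esub>\<close>: by \<open>k\<close>-linearity of \<open>f\<close> it suffices to test \<open>f\<close> on the
  elements \<open>\<pi> powi (j - i)\<close>, \<open>j < n\<close>, whose residues are the coefficients of \<open>p\<^sub>i f\<close>.\<close>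

lemma Cset_of_pmap_eq_zero: "f \<in> Cset v G i \<Longrightarrow> pm i f = 0 \<Longrightarrow> f \<in> Cset v G (i + 1)"
proof -
  assume f: "f \<in> Cset v G i" and p: "pm i f = 0"
  have small: "val_ge v (act G f (\<pi> powi (int j - i))) (int j + 1)" if j: "j < n" for j
  proof -
    have "coeff (pm i f) j = 0" using p by simp
    then have "r (act G f (\<pi> powi (int j - i)) / \<pi> ^ j) = 0"
      using j r_c\<pi> by (simp add: coeff_pmap)
    then have "val_ge v (act G f (\<pi> powi (int j - i)) / \<pi> ^ j) 1"
      using r_zero_iff pmap_coeff_integral[OF f] by blast
    then show ?thesis using val_ge_divide_iff[of "\<pi> ^ j"] unif by (simp add: v_power add.commute)
  qed
  show ?thesis
  proof (rule CsetI[OF Cset_inKG[OF f]])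
    fix x :: 'K assume x: "x \<noteq> 0"
    obtain a where a: "\<forall>j<n. a j \<in> k \<and> val_ge v (a j) (v x + i - int j)"
      "act G f x = (\<Sum>j<n. a j * act G f (\<pi> powi (int j - i)))"
      using act_pi_expansion[OF x, of i f] by blast
    have "val_ge v (a j * act G f (\<pi> powi (int j - i))) (v x + (i + 1))" if "j < n" for j
      using val_ge_mult[of "a j" "v x + i - int j", OF _ small[OF that]] a(1) that by simp
    then show "val_ge v (act G f x) (v x + (i + 1))" unfolding a(2) by (auto intro!: val_ge_sum)
  qed
qed

text \<open>\<open>f\<close> is only \<open>k\<close>-linear, so \<open>u\<close> is replaced by a \<open>k\<^sub>0\<close>-element with the same residue;
  the error term \<open>(u - a) * y\<close> is one step deeper in the filtration.\<close>

lemma act_residue_unit: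
  assumes f: "f \<in> Cset v G i" and u: "val_ge v u 0" and y: "y \<noteq> 0" and w: "w \<noteq> 0" "v w = v y + i"
  shows "r (act G f (u * y) / w) = r u * r (act G f y / w)"
proof -
  obtain a where a: "a \<in> k0" "val_ge v a 0" "r a = r u" "val_ge v (u - a) 1" using residue_lift_k0[OF u] by blast
  have ak: "a \<in> k" using a(1) k0k by blast
  have e: "act G f (u * y) / w = a * (act G f y / w) + act G f ((u - a) * y) / w"
  proof -
    have "u * y = a * y + (u - a) * y" by (simp add: algebra_simps)
    then have "act G f (u * y) = a * act G f y + act G f ((u - a) * y)"
      using act_add_x act_mult_k[OF ak] by simp
    then show ?thesis by (simp add: add_divide_distrib)
  qed
  have X: "val_ge v (act G f y / w) 0"
    using CsetD[OF f y] w by (intro val_ge_divide) simp_all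
  have Z: "val_ge v (act G f ((u - a) * y) / w) 1"
  proof (cases "(u - a) * y = 0")
    case True
    have "act G f ((u - a) * y) = 0" by (simp only: True act_zero_x)
    then show ?thesis by simp
  next
    case False
    then have ua: "u - a \<noteq> 0" by simp
    have "val_ge v (act G f ((u - a) * y)) (v ((u - a) * y) + i)" using CsetD[OF f False] .
    moreover have "v ((u - a) * y) \<ge> 1 + v y" using a(4) ua y by (simp add: v_mult val_ge_def)
    ultimately have "val_ge v (act G f ((u - a) * y)) (1 + v w)" using w(2) val_ge_mono by fastforce
    then show ?thesis by (rule val_ge_divide[OF w(1)])
  qed
  have "r (act G f (u * y) / w) = r (a * (act G f y / w)) + r (act G f ((u - a) * y) / w)"
    unfolding e using val_ge_mult[OF a(2) X] val_ge_mono[OF Z] by (intro r_add) auto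
  also have "r (act G f ((u - a) * y) / w) = 0" using r_zero_iff val_ge_mono[OF Z] Z by simp
  finally show ?thesis using r_mult[OF a(2) X] a(3) by simp
qed

lemma pmap_scale:
  assumes c: "c \<in> k" "c \<noteq> 0" and f: "f \<in> Cset v G i"
  shows "pm (i + v c) (\<lambda>\<sigma>. c * f \<sigma>) = smult (r (c * \<pi> powi (- v c))) (pm i f)"
proof (subst poly_eq_iff, intro allI)
  fix m
  define u where "u = c * \<pi> powi (- v c)"
  have u: "val_ge v u 0" unfolding u_def using c pi_powi_nz by (simp add: val_ge_def v_mult v_pi_powi)
  have "act G (\<lambda>\<sigma>. c * f \<sigma>) (\<pi> powi (int m - (i + v c))) = act G f (u * \<pi> powi (int m - i))"
  proof -
    have "u * \<pi> powi (int m - i) = c * \<pi> powi (int m - (i + v c))"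
      unfolding u_def using pi_powi_add[of "- v c" "int m - i"] by (simp add: algebra_simps)
    then show ?thesis by (simp add: act_scale_f act_mult_k[OF c(1)])
  qed
  moreover have "r (act G f (u * \<pi> powi (int m - i)) / \<pi> ^ m) = r u * r (act G f (\<pi> powi (int m - i)) / \<pi> ^ m)"
    using act_residue_unit[OF f u pi_powi_nz, of "\<pi> ^ m"] unif by (simp add: v_power v_pi_powi)
  ultimately show "coeff (pm (i + v c) (\<lambda>\<sigma>. c * f \<sigma>)) m =
      coeff (smult (r (c * \<pi> powi (- v c))) (pm i f)) m"
    unfolding coeff_pmap coeff_smult u_def by simp
qed

lemma pmap_sum:
  assumes "\<And>b. b \<in> S \<Longrightarrow> g b \<in> Cset v G i"
  shows "pm i (\<lambda>\<sigma>. \<Sum>b\<in>S. g b \<sigma>) = (\<Sum>b\<in>S. pm i (g b))"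
proof (subst poly_eq_iff, intro allI)
  fix m
  have "r (act G (\<lambda>\<sigma>. \<Sum>b\<in>S. g b \<sigma>) (\<pi> powi (int m - i)) / \<pi> ^ m)
      = (\<Sum>b\<in>S. r (act G (g b) (\<pi> powi (int m - i)) / \<pi> ^ m))"
    unfolding act_sum_f sum_divide_distrib using assms pmap_coeff_integral by (intro r_sum) blast
  then show "coeff (pm i (\<lambda>\<sigma>. \<Sum>b\<in>S. g b \<sigma>)) m = coeff (\<Sum>b\<in>S. pm i (g b)) m"
    unfolding coeff_sum coeff_pmap by (simp add: sum_distrib_left)
qed

lemma pmap_diff:
  assumes "f \<in> Cset v G i" "g \<in> Cset v G i"
  shows "pm i (\<lambda>\<sigma>. f \<sigma> - g \<sigma>) = pm i f - pm i g"
proof (subst poly_eq_iff, intro allI)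
  fix m
  have "r (act G (\<lambda>\<sigma>. f \<sigma> - g \<sigma>) (\<pi> powi (int m - i)) / \<pi> ^ m)
      = r (act G f (\<pi> powi (int m - i)) / \<pi> ^ m) - r (act G g (\<pi> powi (int m - i)) / \<pi> ^ m)"
    unfolding act_diff_f diff_divide_distrib using assms pmap_coeff_integral by (intro r_diff) blast+
  then show "coeff (pm i (\<lambda>\<sigma>. f \<sigma> - g \<sigma>)) m = coeff (pm i f - pm i g) m"
    unfolding coeff_diff coeff_pmap by (simp add: right_diff_distrib)
qed


section \<open>Part I: the leading term of a combination\<close>

lemma zero_fun_lambda: "(0 :: ('K \<Rightarrow> 'K) \<Rightarrow> 'K) = (\<lambda>\<sigma>. 0)"
  by (simp add: zero_fun_def)

lemma graded_indep_nonzero: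
  assumes "graded_indep v G r n \<pi> c\<pi> d e0 B" "b \<in> B"
  shows "inKG G b" and "b \<noteq> (\<lambda>\<sigma>. 0)"
  using assms unfolding graded_indep_def zero_fun_lambda by blast+

lemma graded_indep_class:
  "graded_indep v G r n \<pi> c\<pi> d e0 B \<Longrightarrow> fam_indep UNIV smult {b\<in>B. dv b mod int e0 = s mod int e0} fp"
  unfolding graded_indep_def by blast

lemma scaled_Cset:
  assumes b: "inKG G b" "b \<noteq> (\<lambda>\<sigma>. 0)" and c: "c \<in> k" "val_ge v c j"
  shows "(\<lambda>\<sigma>. c * b \<sigma>) \<in> Cset v G (dv b + d + j)"
  using Cset_scale0[OF c(1) _ c(2)] dval_char[OF b] by blast

lemma frakp_scale:
  assumes b: "inKG G b" "b \<noteq> (\<lambda>\<sigma>. 0)" and c: "c \<in> k" "c \<noteq> 0"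
  shows "pm (dv b + d + v c) (\<lambda>\<sigma>. c * b \<sigma>) = smult (r (c * \<pi> powi (- v c))) (fp b)"
  using pmap_scale[OF c] dval_char[OF b] unfolding frakp_def by blast

lemma leading_pmap_of_combination:
  assumes fB: "finite B" and gi: "graded_indep v G r n \<pi> c\<pi> d e0 B"
    and ck: "\<forall>b\<in>B. c b \<in> k0" and nz: "\<exists>b\<in>B. c b \<noteq> 0"
    and m_def: "m = Min {v (c b) + dv b | b. b \<in> B \<and> c b \<noteq> 0}"
    and S_def: "S = {b\<in>B. c b \<noteq> 0 \<and> v (c b) + dv b = m}"
  shows "(\<lambda>\<sigma>. \<Sum>b\<in>B. c b * b \<sigma>) \<in> Cset v G (m + d)"
    and "pm (m + d) (\<lambda>\<sigma>. \<Sum>b\<in>B. c b * b \<sigma>) = (\<Sum>b\<in>S. smult (r (c b * \<pi> powi (- v (c b)))) (fp b))"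
proof -
  have ckk: "c b \<in> k" if "b \<in> B" for b using ck that k0k by blast
  have mle: "m \<le> v (c b) + dv b" if "b \<in> B" "c b \<noteq> 0" for b
    unfolding m_def using fB that by (intro Min_le) auto
  have term_C: "(\<lambda>\<sigma>. c b * b \<sigma>) \<in> Cset v G (m + d + (if b \<in> S then 0 else 1))" if b: "b \<in> B" for b
  proof (cases "c b = 0")
    case False
    have "m + (if b \<in> S then 0 else 1) \<le> v (c b) + dv b" using mle[OF b False] b False unfolding S_def by auto
    then show ?thesis
      using Cset_mono[OF scaled_Cset[OF graded_indep_nonzero[OF gi b] ckk[OF b] val_ge_self]] by (simp add: algebra_simps)
  qed (simp add: Cset_zero)
  then have term_C0: "(\<lambda>\<sigma>. c b * b \<sigma>) \<in> Cset v G (m + d)" if "b \<in> B" for b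
    using that Cset_mono by fastforce
  then show "(\<lambda>\<sigma>. \<Sum>b\<in>B. c b * b \<sigma>) \<in> Cset v G (m + d)" by (intro Cset_sum)
  have "pm (m + d) (\<lambda>\<sigma>. \<Sum>b\<in>B. c b * b \<sigma>) = (\<Sum>b\<in>B. pm (m + d) (\<lambda>\<sigma>. c b * b \<sigma>))"
    using term_C0 by (intro pmap_sum)
  also have "\<dots> = (\<Sum>b\<in>S. pm (m + d) (\<lambda>\<sigma>. c b * b \<sigma>))"
  proof (rule sum.mono_neutral_right)
    show "\<forall>b\<in>B - S. pm (m + d) (\<lambda>\<sigma>. c b * b \<sigma>) = 0"
      using term_C pmap_eq_zero by fastforce
  qed (use fB in \<open>auto simp: S_def\<close>)
  also have "\<dots> = (\<Sum>b\<in>S. smult (r (c b * \<pi> powi (- v (c b)))) (fp b))"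
  proof (rule sum.cong)
    fix b assume "b \<in> S"
    then have b: "b \<in> B" "c b \<noteq> 0" "dv b + d + v (c b) = m + d" unfolding S_def by auto
    show "pm (m + d) (\<lambda>\<sigma>. c b * b \<sigma>) = smult (r (c b * \<pi> powi (- v (c b)))) (fp b)"
      using frakp_scale[OF graded_indep_nonzero[OF gi b(1)] ckk[OF b(1)] b(2)] b(3) by simp
  qed simp
  finally show "pm (m + d) (\<lambda>\<sigma>. \<Sum>b\<in>B. c b * b \<sigma>) = (\<Sum>b\<in>S. smult (r (c b * \<pi> powi (- v (c b)))) (fp b))" .
qed

lemma combination_dval:
  assumes fB: "finite B" and gi: "graded_indep v G r n \<pi> c\<pi> d e0 B"
    and ck: "\<forall>b\<in>B. c b \<in> k0" and nz: "\<exists>b\<in>B. c b \<noteq> 0"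
    and m_def: "m = Min {v (c b) + dv b | b. b \<in> B \<and> c b \<noteq> 0}"
    and S_def: "S = {b\<in>B. c b \<noteq> 0 \<and> v (c b) + dv b = m}"
  defines "f \<equiv> (\<lambda>\<sigma>. \<Sum>b\<in>B. c b * b \<sigma>)"
  shows "f \<noteq> 0 \<and> dv f = m \<and> (\<exists>lam. (\<forall>b\<in>S. lam b \<noteq> 0) \<and> fp f = (\<Sum>b\<in>S. smult (lam b) (fp b)))"
proof -
  define lam where "lam b = r (c b * \<pi> powi (- v (c b)))" for b
  note lead = leading_pmap_of_combination[OF fB gi ck nz m_def S_def, folded f_def lam_def]
  have lam_nz: "lam b \<noteq> 0" if "b \<in> S" for b
    using that pi_powi_nz unfolding S_def lam_def by (intro r_unit) (simp_all add: v_mult v_pi_powi)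
  have "m \<in> {v (c b) + dv b | b. b \<in> B \<and> c b \<noteq> 0}" unfolding m_def using fB nz by (intro Min_in) auto
  then obtain b0 where b0: "b0 \<in> S" unfolding S_def m_def by auto
  have "S \<subseteq> {b\<in>B. dv b mod int e0 = m mod int e0}"
  proof
    fix b assume b: "b \<in> S"
    then obtain q where "v (c b) = int e0 * q" using e0_dvd_v_k0[of "c b"] ck unfolding S_def by blast
    then show "b \<in> {b\<in>B. dv b mod int e0 = m mod int e0}" using b unfolding S_def by auto
  qed
  moreover have "finite S" using fB unfolding S_def by simp
  ultimately have "pm (m + d) f \<noteq> 0"
    using subfield_module.indepD[OF subfield_module_smult graded_indep_class[OF gi, of m], of S lam b0] b0 lam_nz lead(2)
    by auto
  then have "f \<notin> Cset v G (m + d + 1)" using pmap_eq_zero by blast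
  then have "dv f = m" "f \<noteq> 0" using dval_eqI[OF Cset_inKG[OF lead(1)] lead(1)] Cset_zero zero_fun_lambda by auto
  then show ?thesis using lead(2) lam_nz unfolding frakp_def by auto
qed


lemma span_kg_iff:
  assumes "finite B"
  shows "g \<in> fam_span k0 kg_smult B id \<longleftrightarrow> (\<exists>c. (\<forall>b\<in>B. c b \<in> k0) \<and> g = (\<lambda>\<sigma>. \<Sum>b\<in>B. c b * b \<sigma>))"
proof -
  interpret subfield_module k0 kg_smult by (rule subfield_module_kg_smult[OF sub_k0])
  show ?thesis using span_finite_iff[OF assms, of g id] by (simp add: kg_smult_sum)
qed

lemma Cset_combination_iff:
  assumes fB: "finite B" and gi: "graded_indep v G r n \<pi> c\<pi> d e0 B" and ck: "\<forall>b\<in>B. c b \<in> k0"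
  shows "(\<lambda>\<sigma>. \<Sum>b\<in>B. c b * b \<sigma>) \<in> Cset v G i \<longleftrightarrow> (\<forall>b\<in>B. val_ge v (c b) (i - d - dv b))"
proof
  assume C: "(\<lambda>\<sigma>. \<Sum>b\<in>B. c b * b \<sigma>) \<in> Cset v G i"
  show "\<forall>b\<in>B. val_ge v (c b) (i - d - dv b)"
  proof (cases "\<exists>b\<in>B. c b \<noteq> 0")
    case True
    define m where "m = Min {v (c b) + dv b | b. b \<in> B \<and> c b \<noteq> 0}"
    have "(\<lambda>\<sigma>. \<Sum>b\<in>B. c b * b \<sigma>) \<noteq> (\<lambda>\<sigma>. 0) \<and> dv (\<lambda>\<sigma>. \<Sum>b\<in>B. c b * b \<sigma>) = m"
      using combination_dval[OF fB gi ck True m_def refl] zero_fun_lambda by simp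
    then have "i \<le> m + d" using Cset_dval_iff[OF Cset_inKG[OF C]] C by blast
    moreover have "m \<le> v (c b) + dv b" if "b \<in> B" "c b \<noteq> 0" for b
      unfolding m_def using fB that by (intro Min_le) auto
    ultimately show ?thesis by (fastforce simp: val_ge_def)
  qed simp
next
  assume "\<forall>b\<in>B. val_ge v (c b) (i - d - dv b)"
  then have "(\<lambda>\<sigma>. c b * b \<sigma>) \<in> Cset v G i" if "b \<in> B" for b
    using scaled_Cset[OF graded_indep_nonzero[OF gi that]] ck that k0_sub_k by fastforce
  then show "(\<lambda>\<sigma>. \<Sum>b\<in>B. c b * b \<sigma>) \<in> Cset v G i" by (rule Cset_sum)
qed

lemma k0_val_ge_iff:
  assumes c: "c \<in> k0"
  shows "val_ge v c D \<longleftrightarrow> (\<exists>y\<in>val_ring v \<inter> k0. c = \<pi>0 powi ((D - 1) div int e0 + 1) * y)"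
proof -
  define q where "q = (D - 1) div int e0 + 1"
  have p0: "\<pi>0 powi q \<noteq> 0" "v (\<pi>0 powi q) = q * int e0"
    using unif0 by (simp_all add: power_int_not_zero v_powi v_pi0)
  have "val_ge v c D \<longleftrightarrow> val_ge v (c / \<pi>0 powi q) 0"
  proof (cases "c = 0")
    case False
    obtain w where w: "v c = int e0 * w" using e0_dvd_v_k0[OF c False] by blast
    have "D \<le> v c \<longleftrightarrow> q \<le> w"
    proof
      assume "D \<le> v c"
      then show "q \<le> w" using ceiling_div_le[OF e0_pos, of D w] w unfolding q_def by simp
    next
      assume "q \<le> w"
      then have "q * int e0 \<le> w * int e0" by (simp add: mult_right_mono)
      then show "D \<le> v c" using ceiling_div_times_ge[OF e0_pos, of D] w unfolding q_def
        by (simp add: mult.commute)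
    qed
    also have "\<dots> \<longleftrightarrow> 0 \<le> v (c / \<pi>0 powi q)"
      using False p0 w e0_pos by (simp add: v_divide algebra_simps)
    finally show ?thesis using False p0 unif0(2) by (simp add: val_ge_def)
  qed simp
  also have "\<dots> \<longleftrightarrow> (\<exists>y\<in>val_ring v \<inter> k0. c = \<pi>0 powi q * y)"
  proof
    assume "val_ge v (c / \<pi>0 powi q) 0"
    moreover have "c / \<pi>0 powi q \<in> k0" using c unif0 sub_k0 by (intro subfield_divide subfield_powi)
    ultimately show "\<exists>y\<in>val_ring v \<inter> k0. c = \<pi>0 powi q * y"
      using p0 by (intro bexI[of _ "c / \<pi>0 powi q"]) (auto simp: val_ring_def val_ge_def)
  next
    assume "\<exists>y\<in>val_ring v \<inter> k0. c = \<pi>0 powi q * y"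
    then show "val_ge v (c / \<pi>0 powi q) 0" using p0 by (auto simp: val_ring_def val_ge_def)
  qed
  finally show ?thesis unfolding q_def .
qed

lemma Cset_inter_span:
  assumes fB: "finite B" and gi: "graded_indep v G r n \<pi> c\<pi> d e0 B"
  shows "Cset v G i \<inter> fam_span k0 kg_smult B id =
         {(\<lambda>\<sigma>. \<Sum>b\<in>B. c b * b \<sigma>) | c. \<forall>b\<in>B. \<exists>y\<in>val_ring v \<inter> k0.
             c b = \<pi>0 powi ((i - d - dv b - 1) div int e0 + 1) * y}"
  (is "?L = ?R")
proof -
  define P where "P c \<longleftrightarrow> (\<forall>b\<in>B. \<exists>y\<in>val_ring v \<inter> k0.
      c b = \<pi>0 powi ((i - d - dv b - 1) div int e0 + 1) * y)" for c
  have "c b \<in> k0" if "P c" "b \<in> B" for c b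
    using that unif0 sub_k0 unfolding P_def by (auto intro!: subfield_mult subfield_powi)
  then have P: "P c \<longleftrightarrow> (\<forall>b\<in>B. c b \<in> k0) \<and> (\<forall>b\<in>B. val_ge v (c b) (i - d - dv b))" for c
    using k0_val_ge_iff unfolding P_def by blast
  have R: "?R = {(\<lambda>\<sigma>. \<Sum>b\<in>B. c b * b \<sigma>) | c. P c}" unfolding P_def ..
  show ?thesis unfolding R
  proof (intro equalityI subsetI)
    fix g assume "g \<in> ?L"
    then obtain c where "\<forall>b\<in>B. c b \<in> k0" "g = (\<lambda>\<sigma>. \<Sum>b\<in>B. c b * b \<sigma>)" "g \<in> Cset v G i"
      using span_kg_iff[OF fB] by blast
    then show "g \<in> {(\<lambda>\<sigma>. \<Sum>b\<in>B. c b * b \<sigma>) | c. P c}" using P Cset_combination_iff[OF fB gi] by blast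
  next
    fix g assume "g \<in> {(\<lambda>\<sigma>. \<Sum>b\<in>B. c b * b \<sigma>) | c. P c}"
    then obtain c where "P c" "g = (\<lambda>\<sigma>. \<Sum>b\<in>B. c b * b \<sigma>)" by blast
    then show "g \<in> ?L" using P Cset_combination_iff[OF fB gi] span_kg_iff[OF fB] by blast
  qed
qed


section \<open>Part II: existence of graded independent bases\<close>

lemma frakp_in_span_monomials: "fp f \<in> fam_span UNIV smult {..<n} (\<lambda>j. monom 1 j)"
proof -
  interpret pm: subfield_module "UNIV :: 'r set" smult by (rule subfield_module_smult)
  define a where "a j = inverse (r c\<pi>) * r (act G f (\<pi> powi (int j - (dv f + d))) / \<pi> ^ j)" for j
  have "fp f = (\<Sum>j<n. smult (a j) (monom 1 j))"
  proof (subst poly_eq_iff, intro allI)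
    fix m
    have "coeff (\<Sum>j<n. smult (a j) (monom 1 j)) m = (\<Sum>j<n. if j = m then a m else 0)"
      unfolding coeff_sum by (intro sum.cong) auto
    also have "\<dots> = (if m < n then a m else 0)" by (simp add: sum.delta)
    finally show "coeff (fp f) m = coeff (\<Sum>j<n. smult (a j) (monom 1 j)) m"
      unfolding frakp_def coeff_pmap a_def by simp
  qed
  then show ?thesis by (subst pm.span_finite_iff) auto
qed

lemma graded_indep_card:
  assumes gi: "graded_indep v G r n \<pi> c\<pi> d e0 B"
  shows "finite B \<and> card B \<le> e0 * n"
proof -
  interpret pm: subfield_module "UNIV :: 'r set" smult by (rule subfield_module_smult)
  define Bs where "Bs s = {b\<in>B. dv b mod int e0 = s mod int e0}" for s
  have each: "finite (Bs s) \<and> card (Bs s) \<le> n" for s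
  proof -
    have "fam_indep UNIV smult (Bs s) fp" unfolding Bs_def by (rule graded_indep_class[OF gi])
    moreover have "\<forall>b\<in>Bs s. fp b \<in> fam_span UNIV smult {..<n} (\<lambda>j. monom 1 j)" using frakp_in_span_monomials by blast
    ultimately show ?thesis using pm.indep_card_le[of "Bs s" fp "{..<n}"] by simp
  qed
  have BU: "B = (\<Union>s\<in>{0..<int e0}. Bs s)"
  proof
    show "B \<subseteq> (\<Union>s\<in>{0..<int e0}. Bs s)"
    proof
      fix b assume b: "b \<in> B"
      have "dv b mod int e0 \<in> {0..<int e0}" using e0_pos by simp
      moreover have "b \<in> Bs (dv b mod int e0)" unfolding Bs_def using b by simp
      ultimately show "b \<in> (\<Union>s\<in>{0..<int e0}. Bs s)" by blast
    qed
  qed (auto simp: Bs_def)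
  have "finite B" using BU each by (metis finite_UN finite_atLeastLessThan_int)
  moreover have "card B \<le> (\<Sum>s\<in>{0..<int e0}. card (Bs s))" unfolding BU by (rule card_UN_le) simp
  moreover have "(\<Sum>s\<in>{0..<int e0}. card (Bs s)) \<le> (\<Sum>s\<in>{0..<int e0}. n)" using each by (intro sum_mono) auto
  ultimately show ?thesis by (simp add: mult.commute)
qed

lemma graded_indep_insert:
  assumes gi: "graded_indep v G r n \<pi> c\<pi> d e0 B" and g: "inKG G g" "g \<noteq> (\<lambda>\<sigma>. 0)" "g \<notin> B"
    and nsp: "fp g \<notin> fam_span UNIV smult {b\<in>B. dv b mod int e0 = dv g mod int e0} fp"
  shows "graded_indep v G r n \<pi> c\<pi> d e0 (insert g B)"
proof -
  interpret pm: subfield_module "UNIV :: 'r set" smult by (rule subfield_module_smult)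
  have sub: "insert g B \<subseteq> {f. inKG G f \<and> f \<noteq> 0}" using gi g unfolding graded_indep_def zero_fun_lambda by auto
  have "fam_indep UNIV smult {b\<in>insert g B. dv b mod int e0 = s mod int e0} fp" for s
  proof (cases "dv g mod int e0 = s mod int e0")
    case True
    have eq: "{b\<in>insert g B. dv b mod int e0 = s mod int e0} = insert g {b\<in>B. dv b mod int e0 = dv g mod int e0}"
      using True by auto
    show ?thesis unfolding eq
      by (rule pm.indep_insert[OF graded_indep_class[OF gi] nsp]) (use g in auto)
  next
    case False
    have eq: "{b\<in>insert g B. dv b mod int e0 = s mod int e0} = {b\<in>B. dv b mod int e0 = s mod int e0}"
      using False by auto
    show ?thesis unfolding eq by (rule graded_indep_class[OF gi])
  qed
  then show ?thesis using sub unfolding graded_indep_def by blast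
qed

lemma residue_lift_unit:
  assumes "\<mu> \<noteq> 0"
  shows "\<exists>a\<in>k0. a \<noteq> 0 \<and> v a = 0 \<and> val_ge v a 0 \<and> r a = \<mu>"
proof -
  obtain x where x: "val_ge v x 0" "r x = \<mu>" using r_surj by blast
  obtain a where a: "a \<in> k0" "val_ge v a 0" "r a = \<mu>" using residue_lift_k0[OF x(1)] x(2) by metis
  then have "a \<noteq> 0" "\<not> val_ge v a 1" using assms r_zero r_zero_iff[OF a(2)] by auto
  then show ?thesis using a by (auto simp: val_ge_def)
qed

lemma lift_frakp_multiple:
  assumes b: "inKG G b" "b \<noteq> (\<lambda>\<sigma>. 0)"
  shows "\<exists>c\<in>k0. val_ge v c (int e0 * q) \<and> pm (dv b + d + int e0 * q) (\<lambda>\<sigma>. c * b \<sigma>) = smult \<mu> (fp b)"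
proof (cases "\<mu> = 0")
  case True
  have "pm (dv b + d + int e0 * q) (\<lambda>\<sigma>. 0 * b \<sigma>) = 0" using pmap_eq_zero Cset_zero by simp
  then show ?thesis using True sub_k0 by (intro bexI[of _ 0]) (auto simp: subfield_zero)
next
  case False
  define u where "u = \<pi>0 powi q * \<pi> powi (- (int e0 * q))"
  have p0: "\<pi>0 powi q \<noteq> 0" using unif0 by (simp add: power_int_not_zero)
  have u: "u \<noteq> 0" "v u = 0" "val_ge v u 0" unfolding u_def using p0 pi_powi_nz unif0
    by (auto simp: v_mult v_powi v_pi_powi v_pi0 val_ge_def)
  then have ru: "r u \<noteq> 0" using r_unit by blast
  obtain a where a: "a \<in> k0" "a \<noteq> 0" "v a = 0" "val_ge v a 0" "r a = \<mu> / r u"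
    using residue_lift_unit[of "\<mu> / r u"] False ru by auto
  define c where "c = \<pi>0 powi q * a"
  have c: "c \<in> k0" "c \<noteq> 0" "v c = int e0 * q"
    unfolding c_def using a p0 unif0 sub_k0 by (auto simp: v_mult v_powi v_pi0 intro!: subfield_mult subfield_powi)
  have "c * \<pi> powi (- v c) = c * \<pi> powi (- (int e0 * q))" using c(3) by simp
  also have "\<dots> = u * a" unfolding c_def u_def by (simp add: algebra_simps)
  finally have "c * \<pi> powi (- v c) = u * a" .
  then have "r (c * \<pi> powi (- v c)) = \<mu>" using r_mult[OF u(3) a(4)] a(5) ru by simp
  then have "pm (dv b + d + int e0 * q) (\<lambda>\<sigma>. c * b \<sigma>) = smult \<mu> (fp b)"
    using frakp_scale[OF b k0_sub_k[OF c(1)] c(2)] c(3) by simp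
  then show ?thesis using c by (intro bexI[of _ c]) (auto simp: val_ge_def)
qed

lemma approximation_step:
  assumes fB: "finite B" and gi: "graded_indep v G r n \<pi> c\<pi> d e0 B"
    and g: "inKG G g" "g \<in> Cset v G (N + d)" "g \<notin> Cset v G (N + d + 1)"
    and sp: "fp g \<in> fam_span UNIV smult {b\<in>B. dv b mod int e0 = dv g mod int e0} fp"
  shows "\<exists>h\<in>fam_span k0 kg_smult B id. (\<lambda>\<sigma>. g \<sigma> - h \<sigma>) \<in> Cset v G (N + d + 1)"
proof -
  interpret pm: subfield_module "UNIV :: 'r set" smult by (rule subfield_module_smult)
  have dg: "dv g = N" using dval_eqI[OF g] .
  define Cl where "Cl = {b\<in>B. dv b mod int e0 = N mod int e0}"
  define q where "q b = (N - dv b) div int e0" for b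
  have fCl: "finite Cl" "Cl \<subseteq> B" unfolding Cl_def using fB by auto
  obtain \<mu> where \<mu>: "fp g = (\<Sum>b\<in>Cl. smult (\<mu> b) (fp b))"
    using sp pm.span_finite_iff[OF fCl(1)] unfolding Cl_def dg by auto
  have level: "dv b + d + int e0 * q b = N + d" if "b \<in> Cl" for b
  proof -
    have "int e0 dvd N - dv b" using that unfolding Cl_def by (simp add: mod_eq_dvd_iff dvd_diff_commute)
    then show ?thesis unfolding q_def by simp
  qed
  have "\<exists>c\<in>k0. val_ge v c (int e0 * q b) \<and> pm (N + d) (\<lambda>\<sigma>. c * b \<sigma>) = smult (\<mu> b) (fp b)"
    if b: "b \<in> Cl" for b
    using lift_frakp_multiple[OF graded_indep_nonzero[OF gi], of b "q b" "\<mu> b"] level[OF b] b fCl(2)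
    by auto
  then obtain c where c: "\<And>b. b \<in> Cl \<Longrightarrow> c b \<in> k0 \<and> val_ge v (c b) (int e0 * q b) \<and>
      pm (N + d) (\<lambda>\<sigma>. c b * b \<sigma>) = smult (\<mu> b) (fp b)"
    by metis
  define h where "h = (\<lambda>\<sigma>. \<Sum>b\<in>Cl. c b * b \<sigma>)"
  have "h \<in> fam_span k0 kg_smult Cl id" unfolding h_def using span_kg_iff[OF fCl(1)] c by blast
  then have hsp: "h \<in> fam_span k0 kg_smult B id"
    using subfield_module.span_mono[OF subfield_module_kg_smult[OF sub_k0] fCl(2)] by blast
  have tC: "(\<lambda>\<sigma>. c b * b \<sigma>) \<in> Cset v G (N + d)" if b: "b \<in> Cl" for b
  proof -
    have "b \<in> B" "c b \<in> k" "val_ge v (c b) (int e0 * q b)" using b c[OF b] fCl(2) k0_sub_k by auto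
    then show ?thesis using scaled_Cset[OF graded_indep_nonzero[OF gi]] level[OF b] by metis
  qed
  have hC: "h \<in> Cset v G (N + d)" unfolding h_def using tC by (intro Cset_sum)
  have "pm (N + d) h = (\<Sum>b\<in>Cl. pm (N + d) (\<lambda>\<sigma>. c b * b \<sigma>))" unfolding h_def using tC by (intro pmap_sum)
  also have "\<dots> = pm (N + d) g" using c \<mu> unfolding frakp_def dg by simp
  finally have "pm (N + d) (\<lambda>\<sigma>. g \<sigma> - h \<sigma>) = 0" using pmap_diff[OF g(2) hC] by simp
  then show ?thesis using Cset_of_pmap_eq_zero[OF Cset_diff[OF g(2) hC]] hsp by auto
qed


lemma k0_cauchy_limit:
  assumes s: "\<forall>j. s j \<in> k0" and cauchy: "\<forall>N. \<exists>M. \<forall>i\<ge>M. \<forall>j\<ge>M. val_ge v (s i - s j) N"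
  shows "\<exists>l\<in>k0. \<forall>N. eventually (\<lambda>j. val_ge v (s j - l) N) sequentially"
proof -
  have vclose: "vclose v N x y \<longleftrightarrow> val_ge v (x - y) N" for N x y
    unfolding vclose_def val_ge_def by auto
  show ?thesis
    using compl_k0 s cauchy unfolding v_complete_def vclose eventually_sequentially by blast
qed

lemma approximation_coefficients_converge:
  assumes fB: "finite B" and gi: "graded_indep v G r n \<pi> c\<pi> d e0 B"
    and cs: "\<And>j. \<forall>b\<in>B. cs j b \<in> k0"
    and approx: "\<And>j. (\<lambda>\<sigma>. f \<sigma> - (\<Sum>b\<in>B. cs j b * b \<sigma>)) \<in> Cset v G (int j)"
  shows "\<exists>l. \<forall>b\<in>B. l b \<in> k0 \<and> (\<forall>N. eventually (\<lambda>j. val_ge v (cs j b - l b) N) sequentially)"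
proof -
  have cauchy: "val_ge v (cs i b - cs j b) (int M - d - dv b)"
    if "M \<le> i" "M \<le> j" "b \<in> B" for i j M b
  proof -
    have "(\<lambda>\<sigma>. (f \<sigma> - (\<Sum>b\<in>B. cs j b * b \<sigma>)) - (f \<sigma> - (\<Sum>b\<in>B. cs i b * b \<sigma>))) \<in> Cset v G (int M)"
      using Cset_diff[OF Cset_mono[OF approx] Cset_mono[OF approx]] that by simp
    moreover have "(\<lambda>\<sigma>. (f \<sigma> - (\<Sum>b\<in>B. cs j b * b \<sigma>)) - (f \<sigma> - (\<Sum>b\<in>B. cs i b * b \<sigma>)))
        = (\<lambda>\<sigma>. \<Sum>b\<in>B. (cs i b - cs j b) * b \<sigma>)"
      by (simp add: fun_eq_iff left_diff_distrib sum_subtractf)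
    moreover have "\<forall>b\<in>B. cs i b - cs j b \<in> k0" using cs sub_k0 by (auto intro: subfield_diff)
    ultimately show ?thesis using Cset_combination_iff[OF fB gi] that by auto
  qed
  have "\<forall>b\<in>B. \<exists>l. l \<in> k0 \<and> (\<forall>N. eventually (\<lambda>j. val_ge v (cs j b - l) N) sequentially)"
  proof
    fix b assume b: "b \<in> B"
    have "\<exists>l\<in>k0. \<forall>N. eventually (\<lambda>j. val_ge v (cs j b - l) N) sequentially"
    proof (rule k0_cauchy_limit)
      show "\<forall>N. \<exists>M. \<forall>i\<ge>M. \<forall>j\<ge>M. val_ge v (cs i b - cs j b) N"
      proof
        fix N
        have "N \<le> int (nat (N + d + dv b)) - d - dv b" by linarith
        then show "\<exists>M. \<forall>i\<ge>M. \<forall>j\<ge>M. val_ge v (cs i b - cs j b) N"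
          using cauchy[OF _ _ b, of "nat (N + d + dv b)"] val_ge_mono by blast
      qed
    qed (use cs b in blast)
    then show "\<exists>l. l \<in> k0 \<and> (\<forall>N. eventually (\<lambda>j. val_ge v (cs j b - l) N) sequentially)" by blast
  qed
  then show ?thesis by (rule bchoice)
qed

lemma span_closed:
  assumes fB: "finite B" and gi: "graded_indep v G r n \<pi> c\<pi> d e0 B" and f: "inKG G f"
    and approx: "\<forall>j::nat. \<exists>h\<in>fam_span k0 kg_smult B id. (\<lambda>\<sigma>. f \<sigma> - h \<sigma>) \<in> Cset v G (int j)"
  shows "f \<in> fam_span k0 kg_smult B id"
proof -
  have "\<forall>j. \<exists>c. (\<forall>b\<in>B. c b \<in> k0) \<and> (\<lambda>\<sigma>. f \<sigma> - (\<Sum>b\<in>B. c b * b \<sigma>)) \<in> Cset v G (int j)"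
  proof
    fix j
    obtain h where "h \<in> fam_span k0 kg_smult B id" "(\<lambda>\<sigma>. f \<sigma> - h \<sigma>) \<in> Cset v G (int j)"
      using approx by blast
    then show "\<exists>c. (\<forall>b\<in>B. c b \<in> k0) \<and> (\<lambda>\<sigma>. f \<sigma> - (\<Sum>b\<in>B. c b * b \<sigma>)) \<in> Cset v G (int j)"
      using span_kg_iff[OF fB] by auto
  qed
  then obtain cs where "\<forall>j. (\<forall>b\<in>B. cs j b \<in> k0) \<and> (\<lambda>\<sigma>. f \<sigma> - (\<Sum>b\<in>B. cs j b * b \<sigma>)) \<in> Cset v G (int j)"
    by (auto dest!: choice)
  then have cs: "\<And>j. \<forall>b\<in>B. cs j b \<in> k0"
    "\<And>j. (\<lambda>\<sigma>. f \<sigma> - (\<Sum>b\<in>B. cs j b * b \<sigma>)) \<in> Cset v G (int j)"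
    by blast+
  obtain l where l: "\<forall>b\<in>B. l b \<in> k0 \<and> (\<forall>N. eventually (\<lambda>j. val_ge v (cs j b - l b) N) sequentially)"
    using approximation_coefficients_converge[OF fB gi cs] by blast
  define h where "h = (\<lambda>\<sigma>. \<Sum>b\<in>B. l b * b \<sigma>)"
  have "(\<lambda>\<sigma>. f \<sigma> - h \<sigma>) \<in> Cset v G N" for N
  proof -
    have "eventually (\<lambda>j. \<forall>b\<in>B. val_ge v (cs j b - l b) (N - d - dv b)) sequentially"
      using l fB by (intro eventually_ball_finite) auto
    then obtain M where "\<forall>j\<ge>M. \<forall>b\<in>B. val_ge v (cs j b - l b) (N - d - dv b)"
      unfolding eventually_sequentially by blast
    then obtain j where j: "nat N \<le> j" "\<forall>b\<in>B. val_ge v (cs j b - l b) (N - d - dv b)"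
      using max.cobounded1 max.cobounded2 by blast
    have "\<forall>b\<in>B. cs j b - l b \<in> k0" using cs(1) l sub_k0 by (auto intro: subfield_diff)
    then have "(\<lambda>\<sigma>. \<Sum>b\<in>B. (cs j b - l b) * b \<sigma>) \<in> Cset v G N"
      using Cset_combination_iff[OF fB gi, of "\<lambda>b. cs j b - l b" N] j(2) by blast
    moreover have "(\<lambda>\<sigma>. f \<sigma> - (\<Sum>b\<in>B. cs j b * b \<sigma>)) \<in> Cset v G N"
      using Cset_mono[OF cs(2)[of j], of N] j(1) by linarith
    moreover have "(\<lambda>\<sigma>. f \<sigma> - h \<sigma>)
        = (\<lambda>\<sigma>. (f \<sigma> - (\<Sum>b\<in>B. cs j b * b \<sigma>)) + (\<Sum>b\<in>B. (cs j b - l b) * b \<sigma>))"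
      unfolding h_def by (simp add: fun_eq_iff left_diff_distrib sum_subtractf)
    ultimately show ?thesis using Cset_add by simp
  qed
  moreover have "inKG G h" unfolding h_def using graded_indep_nonzero(1)[OF gi] by (intro inKG_lin) blast
  ultimately have "(\<lambda>\<sigma>. f \<sigma> - h \<sigma>) = (\<lambda>\<sigma>. 0)" using Cset_notall[OF inKG_diff[OF f]] by blast
  then have "f = h" by (simp add: fun_eq_iff)
  then show ?thesis unfolding h_def using span_kg_iff[OF fB] l by blast
qed

lemma best_approximation:
  assumes fB: "finite B" and gi: "graded_indep v G r n \<pi> c\<pi> d e0 B" and f: "inKG G f"
    and nsp: "f \<notin> fam_span k0 kg_smult B id"
  obtains N h where "h \<in> fam_span k0 kg_smult B id" "(\<lambda>\<sigma>. f \<sigma> - h \<sigma>) \<in> Cset v G (N + d)"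
    "\<forall>h'\<in>fam_span k0 kg_smult B id. (\<lambda>\<sigma>. f \<sigma> - h' \<sigma>) \<notin> Cset v G (N + d + 1)"
proof -
  define Q where "Q N \<longleftrightarrow> (\<exists>h\<in>fam_span k0 kg_smult B id. (\<lambda>\<sigma>. f \<sigma> - h \<sigma>) \<in> Cset v G (N + d))" for N
  obtain N0 :: nat where N0: "\<forall>h\<in>fam_span k0 kg_smult B id. (\<lambda>\<sigma>. f \<sigma> - h \<sigma>) \<notin> Cset v G (int N0)"
    using span_closed[OF fB gi f] nsp by blast
  have bounded: "N < int N0 - d" if "Q N" for N
  proof (rule ccontr)
    assume "\<not> N < int N0 - d"
    then show False using that N0 Cset_mono[of _ "N + d" "int N0"] unfolding Q_def by auto
  qed
  obtain i1 where "f \<in> Cset v G i1" using Cset_exists[OF f] by blast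
  then have Q1: "Q (i1 - d)" unfolding Q_def
    using subfield_module.span_zero[OF subfield_module_kg_smult[OF sub_k0]] by (intro bexI[of _ 0]) auto
  define S where "S = {N. i1 - d \<le> N \<and> N \<le> int N0 - d \<and> Q N}"
  have fS: "finite S" unfolding S_def by (rule finite_subset[of _ "{i1 - d..int N0 - d}"]) auto
  have "i1 - d \<in> S" unfolding S_def using Q1 bounded[OF Q1] by simp
  then have "Max S \<in> S" using fS by (intro Max_in) auto
  moreover have "\<not> Q (Max S + 1)"
  proof
    assume q: "Q (Max S + 1)"
    then have "Max S + 1 \<in> S" using \<open>Max S \<in> S\<close> bounded[OF q] unfolding S_def by simp
    then show False using Max_ge[OF fS] by fastforce
  qed
  ultimately show ?thesis using that unfolding S_def Q_def by (auto simp: algebra_simps)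
qed


lemma subspace_sum:
  assumes L: "is_subspace F sm L" and h: "\<forall>t\<in>T. c t \<in> F \<and> x t \<in> L"
  shows "(\<Sum>t\<in>T. sm (c t) (x t)) \<in> L"
  using h
proof (induction T rule: infinite_finite_induct)
  case (insert t T)
  then show ?case using L unfolding is_subspace_def by simp
qed (use L in \<open>auto simp: is_subspace_def\<close>)

lemma maximal_graded_indep_spans:
  assumes LK: "L \<subseteq> {f. inKG G f}" and Ls: "is_subspace k0 kg_smult L"
    and B: "B \<subseteq> L" "graded_indep v G r n \<pi> c\<pi> d e0 B"
    and maximal: "\<And>B'. B' \<subseteq> L \<Longrightarrow> graded_indep v G r n \<pi> c\<pi> d e0 B' \<Longrightarrow> card B' \<le> card B"
    and spL: "fam_span k0 kg_smult B id \<subseteq> L" and fL: "f \<in> L"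
  shows "f \<in> fam_span k0 kg_smult B id"
proof (rule ccontr)
  interpret kg: subfield_module k0 kg_smult by (rule subfield_module_kg_smult[OF sub_k0])
  assume nsp: "f \<notin> fam_span k0 kg_smult B id"
  have fB: "finite B" using graded_indep_card[OF B(2)] by blast
  have fK: "inKG G f" using fL LK by blast
  obtain N h where h: "h \<in> fam_span k0 kg_smult B id" "(\<lambda>\<sigma>. f \<sigma> - h \<sigma>) \<in> Cset v G (N + d)"
    and best: "\<forall>h'\<in>fam_span k0 kg_smult B id. (\<lambda>\<sigma>. f \<sigma> - h' \<sigma>) \<notin> Cset v G (N + d + 1)"
    using best_approximation[OF fB B(2) fK nsp] by blast
  define g where "g = (\<lambda>\<sigma>. f \<sigma> - h \<sigma>)"
  have g: "inKG G g" "g \<in> Cset v G (N + d)" "g \<notin> Cset v G (N + d + 1)"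
    using h best Cset_inKG unfolding g_def by blast+
  have "g = f + kg_smult (- 1) h" unfolding g_def kg_smult_def by (simp add: fun_eq_iff)
  moreover have "kg_smult (- 1) h \<in> L"
    using Ls spL h(1) subfield_uminus[OF sub_k0 subfield_one[OF sub_k0]] unfolding is_subspace_def by blast
  ultimately have gL: "g \<in> L" using Ls fL unfolding is_subspace_def by simp
  have gB: "g \<notin> B"
  proof
    assume "g \<in> B"
    then have "g + h \<in> fam_span k0 kg_smult B id" using kg.span_add kg.span_base[of g B id] h(1) by simp
    moreover have "g + h = f" unfolding g_def by (simp add: fun_eq_iff)
    ultimately show False using nsp by simp
  qed
  show False
  proof (cases "fp g \<in> fam_span UNIV smult {b\<in>B. dv b mod int e0 = dv g mod int e0} fp")
    case True
    then obtain h' where h': "h' \<in> fam_span k0 kg_smult B id" "(\<lambda>\<sigma>. g \<sigma> - h' \<sigma>) \<in> Cset v G (N + d + 1)"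
      using approximation_step[OF fB B(2) g] by blast
    moreover have "(\<lambda>\<sigma>. g \<sigma> - h' \<sigma>) = (\<lambda>\<sigma>. f \<sigma> - (h + h') \<sigma>)" unfolding g_def by (simp add: fun_eq_iff)
    ultimately show False using best kg.span_add[OF h(1) h'(1)] by auto
  next
    case False
    have "graded_indep v G r n \<pi> c\<pi> d e0 (insert g B)"
      using graded_indep_insert[OF B(2) g(1) _ gB False] g(3) Cset_zero by fastforce
    then show False using maximal[of "insert g B"] gL B(1) fB gB by simp
  qed
qed

lemma graded_basis_exists:
  assumes LK: "L \<subseteq> {f. inKG G f}" and Ls: "is_subspace k0 kg_smult L"
  shows "\<exists>B. B \<subseteq> L \<and> graded_indep v G r n \<pi> c\<pi> d e0 B \<and> fam_indep k0 kg_smult B id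
              \<and> fam_span k0 kg_smult B id = L"
proof -
  interpret kg: subfield_module k0 kg_smult by (rule subfield_module_kg_smult[OF sub_k0])
  define P where "P m \<longleftrightarrow> (\<exists>B. B \<subseteq> L \<and> graded_indep v G r n \<pi> c\<pi> d e0 B \<and> card B = m)" for m
  have "P 0" unfolding P_def graded_indep_def fam_indep_def by (intro exI[of _ "{}"]) auto
  moreover have "\<forall>m. P m \<longrightarrow> m \<le> e0 * n" unfolding P_def using graded_indep_card by blast
  ultimately obtain m where m: "P m" "\<forall>m'. P m' \<longrightarrow> m' \<le> m" using Nat.ex_has_greatest_nat by blast
  then obtain B where B: "B \<subseteq> L" "graded_indep v G r n \<pi> c\<pi> d e0 B" "card B = m"
    unfolding P_def by blast
  have maximal: "card B' \<le> card B" if "B' \<subseteq> L" "graded_indep v G r n \<pi> c\<pi> d e0 B'" for B'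
    using m(2) B(3) that unfolding P_def by blast
  have fB: "finite B" using graded_indep_card[OF B(2)] by blast
  have ind: "fam_indep k0 kg_smult B id"
  proof (rule kg.indepI_finite[OF fB])
    fix a assume "\<forall>u\<in>B. a u \<in> k0" "(\<Sum>u\<in>B. kg_smult (a u) (id u)) = 0"
    then show "\<forall>u\<in>B. a u = 0"
      using combination_dval[OF fB B(2), of a] kg_smult_sum[of a B] by auto
  qed
  have spL: "fam_span k0 kg_smult B id \<subseteq> L"
  proof
    fix h assume "h \<in> fam_span k0 kg_smult B id"
    then obtain c where "\<forall>b\<in>B. c b \<in> k0" "h = (\<Sum>b\<in>B. kg_smult (c b) (id b))"
      using kg.span_finite_iff[OF fB] by blast
    then show "h \<in> L" using subspace_sum[OF Ls, of B c id] B(1) by auto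
  qed
  moreover have "L \<subseteq> fam_span k0 kg_smult B id"
    using maximal_graded_indep_spans[OF LK Ls B(1,2) maximal spL] by blast
  ultimately show ?thesis using B(1,2) ind by blast
qed

end

theorem proposition4p1p2:
  fixes v :: "'K::field \<Rightarrow> int" and k k0 :: "'K set" and G :: "('K \<Rightarrow> 'K) set"
    and r :: "'K \<Rightarrow> 'r::field" and \<pi> \<pi>0 c\<pi> :: 'K and n e0 :: nat and d :: int
  assumes dv: "discrete_val v" and complK: "v_complete v UNIV"
    and sub_k: "is_subfield k" and sub_k0: "is_subfield k0" and k0k: "k0 \<subseteq> k"
    and compl_k: "v_complete v k" and compl_k0: "v_complete v k0"
    and fin_Kk: "\<exists>m. is_ext_deg k UNIV m" and fin_kk0: "\<exists>m. is_ext_deg k0 k m"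
    and n_def: "n = ext_deg k UNIV"
    and G_def: "G = galois_group k" and galois: "card G = n"
    and totram_Kk: "v ` (k - {0}) = {int n * z | z. True}"
    and totram_kk0: "v ` (k0 - {0}) = {int (ext_deg k0 k) * int n * z | z. True}"
    and e0_def: "e0 = ext_deg k0 UNIV"
    and res: "is_residue_map v r"
    and unif: "\<pi> \<noteq> 0" "v \<pi> = 1"
    and unif0: "\<pi>0 \<in> k0" "\<pi>0 \<noteq> 0" "v \<pi>0 > 0" "\<forall>x\<in>k0 - {0}. v x > 0 \<longrightarrow> v \<pi>0 \<le> v x"
    and d_def: "d = diff_val v G k - int n + 1"
    and c\<pi>_def: "c\<pi> = trace G (\<pi> powi (- d))"
  shows
   "(\<forall>B c. finite B \<and> graded_indep v G r n \<pi> c\<pi> d e0 B \<and> (\<forall>b\<in>B. c b \<in> k0) \<and> (\<exists>b\<in>B. c b \<noteq> 0) \<longrightarrow>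
      (let m = Min {v (c b) + dval v G d b | b. b \<in> B \<and> c b \<noteq> 0};
           f = (\<lambda>\<sigma>. \<Sum>b\<in>B. c b * b \<sigma>);
           S = {b\<in>B. c b \<noteq> 0 \<and> v (c b) + dval v G d b = m}
       in f \<noteq> 0 \<and> dval v G d f = m \<and>
          (\<exists>lam. (\<forall>b\<in>S. lam b \<noteq> 0) \<and>
             frakp v G r n \<pi> c\<pi> d f = (\<Sum>b\<in>S. smult (lam b) (frakp v G r n \<pi> c\<pi> d b)))))
    \<and> (\<forall>B i. finite B \<and> graded_indep v G r n \<pi> c\<pi> d e0 B \<longrightarrow>
         Cset v G i \<inter> fam_span k0 kg_smult B id =
         {(\<lambda>\<sigma>. \<Sum>b\<in>B. c b * b \<sigma>) | c. \<forall>b\<in>B. \<exists>y\<in>val_ring v \<inter> k0.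
             c b = \<pi>0 powi ((i - d - dval v G d b - 1) div int e0 + 1) * y})
    \<and> (\<forall>L. L \<subseteq> {f. inKG G f} \<and> is_subspace k0 kg_smult L \<longrightarrow>
         (\<exists>B. B \<subseteq> L \<and> graded_indep v G r n \<pi> c\<pi> d e0 B \<and> fam_indep k0 kg_smult B id
              \<and> fam_span k0 kg_smult B id = L))"
proof -
  interpret galois_tower v k k0 \<pi> \<pi>0 n e0 G r c\<pi> d
    unfolding galois_tower_def galois_tower_axioms_def ramified_tower_def ramified_tower_axioms_def
      discrete_valuation_def
    using assms by blast
  show ?thesis
  proof (intro conjI allI impI, goal_cases)
    case (1 B c)
    then show ?case unfolding Let_def using combination_dval[OF _ _ _ _ refl refl] by blast
  next
    case (2 B i)
    then show ?case using Cset_inter_span by blast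
  next
    case (3 L)
    then show ?case using graded_basis_exists by blast
  qed
qed

end
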